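(* Let $(G,c)$ be a tensor network template. Suppose there is an integer $d>0$ such that for every edge $e$ the capacity $c_e$ is a power of $d$ (that is, $c_e=d^{m_e}$ with $m_e\in\mathbb{Z}_{\ge0}$). Then $\mathrm{QMF}(G,c)=\mathrm{QMC}(G,c)$.
   Context: A tensor network template $(G,c)$ consists of a finite undirected graph $G$ (multiple edges allowed) with edge set $E$ whose vertex set is partitioned as $S\sqcup T\sqcup V$. Every element of $S$ (inputs) and every element of $T$ (outputs) is an open end of degree $1$; the elements of $V$ are called vertices. For $u\in S\sqcup T$, $e(u)$ denotes the edge incident to $u$. A capacity function $c:E\to\mathbb{Z}_{>0}$ is given, and to each edge $e$ one associates $\mathbb{C}^{c_e}$ with a fixed basis. At each vertex $v$ of degree $d_v$ an ordering $e(v,1),\dots,e(v,d_v)$ of the incident edge-ends is fixed. A tensor assignment $\mathcal T=(\mathcal T_v)_{v\in V}$ chooses $\mathcal T_v\in\bigotimes_{i=1}^{d_v}\mathbb{C}^{c_{e(v,i)}}$ for each $v$. Let $V_S=\bigotimes_{u\in S}\mathbb{C}^{c_{e(u)}}$ and $V_T=\bigotimes_{u\in T}\mathbb{C}^{c_{e(u)}}$. Contracting the network along all edges gives $\beta(G,c;\mathcal T)\in\mathrm{Hom}(V_S,V_T)$, whose matrix entries are $\langle I_T|\beta|I_S\rangle=\sum_W\prod_{v\in V}(\mathcal T_v)_{W|_v}$. Here $W$ ranges over all assignments of basis indices to all edges that agree with $I_S$ on the input edges and with $I_T$ on the output edges, and $W|_v$ is the tuple of indices on $e(v,1),\dots,e(v,d_v)$.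 The quantum max-flow is $\mathrm{QMF}(G,c)=\max_{\mathcal T}\operatorname{rank}\beta(G,c;\mathcal T)$. An edge cut set is a set $C\subseteq E$ for which there is a partition $S\sqcup T\sqcup V=\bar S\sqcup\bar T$ with $S\subseteq\bar S$, $T\subseteq\bar T$, and $C$ equal to the set of edges having one endpoint in $\bar S$ and the other in $\bar T$. The quantum min-cut is $\mathrm{QMC}(G,c)=\min_C\prod_{e\in C}c_e$, the minimum taken over all edge cut sets $C$. *)

theory Defs
  imports Complex_Main
begin

text \<open>
Nodes (inputs S, outputs T, vertices V) have type 'v,
edges have type 'e. The finite edge set is E and every edge e has two endpoints
given by ends e (multiple edges allowed; an edge-end is a pair (e, b) with b a bool
selecting the endpoint).
\<close>

definition endpt :: "('e \<Rightarrow> 'v \<times> 'v) \<Rightarrow> 'e \<Rightarrow> bool \<Rightarrow> 'v" where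
  "endpt ends e b = (if b then snd (ends e) else fst (ends e))"

definition ends_at :: "'e set \<Rightarrow> ('e \<Rightarrow> 'v \<times> 'v) \<Rightarrow> 'v \<Rightarrow> ('e \<times> bool) set" where
  "ends_at E ends u = {(e, b). e \<in> E \<and> endpt ends e b = u}"

definition incident :: "'e set \<Rightarrow> ('e \<Rightarrow> 'v \<times> 'v) \<Rightarrow> 'e \<Rightarrow> 'v \<Rightarrow> bool" where
  "incident E ends e u \<longleftrightarrow> e \<in> E \<and> (fst (ends e) = u \<or> snd (ends e) = u)"

definition tn_template ::
  "'v set \<Rightarrow> 'v set \<Rightarrow> 'v set \<Rightarrow> 'e set \<Rightarrow> ('e \<Rightarrow> 'v \<times> 'v) \<Rightarrow> ('e \<Rightarrow> nat) \<Rightarrow> bool" where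
  "tn_template S T V E ends c \<longleftrightarrow>
     finite S \<and> finite T \<and> finite V \<and> finite E \<and>
     S \<inter> T = {} \<and> S \<inter> V = {} \<and> T \<inter> V = {} \<and>
     (\<forall>e\<in>E. fst (ends e) \<in> S \<union> T \<union> V \<and> snd (ends e) \<in> S \<union> T \<union> V) \<and>
     (\<forall>u\<in>S \<union> T. card (ends_at E ends u) = 1) \<and>
     (\<forall>e\<in>E. c e > 0)"

definition edge_assignments :: "'e set \<Rightarrow> ('e \<Rightarrow> nat) \<Rightarrow> ('e \<Rightarrow> nat) set" where
  "edge_assignments E c = {W. (\<forall>e\<in>E. W e < c e) \<and> (\<forall>e. e \<notin> E \<longrightarrow> W e = 0)}"

definition port_assignments ::
  "'e set \<Rightarrow> ('e \<Rightarrow> 'v \<times> 'v) \<Rightarrow> ('e \<Rightarrow> nat) \<Rightarrow> 'v set \<Rightarrow> ('v \<Rightarrow> nat) set" where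
  "port_assignments E ends c P =
     {I. (\<forall>u\<in>P. \<forall>e. incident E ends e u \<longrightarrow> I u < c e) \<and> (\<forall>u. u \<notin> P \<longrightarrow> I u = 0)}"

text \<open>A tensor assignment gives for each vertex v a function Tn v from index tuples
  on the edge-ends at v (functions on ends_at v, zero elsewhere) to complex numbers.
  Contraction: the matrix entry of beta at (I_T, I_S).\<close>
definition contract ::
  "'v set \<Rightarrow> 'v set \<Rightarrow> 'v set \<Rightarrow> 'e set \<Rightarrow> ('e \<Rightarrow> 'v \<times> 'v) \<Rightarrow> ('e \<Rightarrow> nat) \<Rightarrow>
   ('v \<Rightarrow> (('e \<times> bool) \<Rightarrow> nat) \<Rightarrow> complex) \<Rightarrow> ('v \<Rightarrow> nat) \<Rightarrow> ('v \<Rightarrow> nat) \<Rightarrow> complex" where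
  "contract S T V E ends c Tn IT IS =
     (\<Sum>W \<in> {W \<in> edge_assignments E c.
               (\<forall>u\<in>S. \<forall>e. incident E ends e u \<longrightarrow> W e = IS u) \<and>
               (\<forall>u\<in>T. \<forall>e. incident E ends e u \<longrightarrow> W e = IT u)}.
        \<Prod>v\<in>V. Tn v (\<lambda>(e, b). if (e, b) \<in> ends_at E ends v then W e else 0))"

definition lin_indep_cols :: "'r set \<Rightarrow> ('r \<Rightarrow> 'c \<Rightarrow> complex) \<Rightarrow> 'c set \<Rightarrow> bool" where
  "lin_indep_cols R M J \<longleftrightarrow>
     (\<forall>a :: 'c \<Rightarrow> complex. (\<forall>r\<in>R. (\<Sum>j\<in>J. a j * M r j) = 0) \<longrightarrow> (\<forall>j\<in>J. a j = 0))"

definition mat_rank :: "'r set \<Rightarrow> 'c set \<Rightarrow> ('r \<Rightarrow> 'c \<Rightarrow> complex) \<Rightarrow> nat" where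
  "mat_rank R C M = Max {card J | J. J \<subseteq> C \<and> lin_indep_cols R M J}"

definition QMF ::
  "'v set \<Rightarrow> 'v set \<Rightarrow> 'v set \<Rightarrow> 'e set \<Rightarrow> ('e \<Rightarrow> 'v \<times> 'v) \<Rightarrow> ('e \<Rightarrow> nat) \<Rightarrow> nat" where
  "QMF S T V E ends c =
     Max {mat_rank (port_assignments E ends c T) (port_assignments E ends c S)
            (contract S T V E ends c Tn) | Tn. True}"

definition is_edge_cut ::
  "'v set \<Rightarrow> 'v set \<Rightarrow> 'v set \<Rightarrow> 'e set \<Rightarrow> ('e \<Rightarrow> 'v \<times> 'v) \<Rightarrow> 'e set \<Rightarrow> bool" where
  "is_edge_cut S T V E ends C \<longleftrightarrow>
     (\<exists>Sb Tb. Sb \<inter> Tb = {} \<and> Sb \<union> Tb = S \<union> T \<union> V \<and> S \<subseteq> Sb \<and> T \<subseteq> Tb \<and>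
        C = {e\<in>E. (fst (ends e) \<in> Sb \<and> snd (ends e) \<in> Tb) \<or>
                    (fst (ends e) \<in> Tb \<and> snd (ends e) \<in> Sb)})"

definition QMC ::
  "'v set \<Rightarrow> 'v set \<Rightarrow> 'v set \<Rightarrow> 'e set \<Rightarrow> ('e \<Rightarrow> 'v \<times> 'v) \<Rightarrow> ('e \<Rightarrow> nat) \<Rightarrow> nat" where
  "QMC S T V E ends c = Min {\<Prod>e\<in>C. c e | C. is_edge_cut S T V E ends C}"

end

theory Submission
  imports Defs "HOL-Library.FuncSet"
begin

text \<open>
Upper bound: for every cut C the contraction factors through the edge space of C, so every
tensor assignment has rank at most prod_{e in C} c_e.

Lower bound: write c_e = d^(m_e) and take an integral maximum flow for the capacities m_e.
By max-flow min-cut its value F is the capacity sum_{e in C} m_e of some cut C. Decompose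
the flow into F unit paths from the inputs to the outputs and view an index of an edge that
carries k flow units as k base-d digits. Each vertex gets the 0/1 tensor that forwards the
digit of every incoming unit to the outgoing unit of the same path. The input configurations
that only use the digits of flow units give d^F = prod_{e in C} c_e columns of the contraction,
each with a nonzero entry in a row where all the others vanish, hence linearly independent.
\<close>

section \<open>Rank of matrices\<close>

lemma exists_nontrivial_homogeneous_solution:
  fixes B :: "'x \<Rightarrow> 'j \<Rightarrow> complex"
  assumes "finite K" "finite J" "card K < card J"
  shows "\<exists>a. (\<forall>x\<in>K. (\<Sum>j\<in>J. a j * B x j) = 0) \<and> (\<exists>j\<in>J. a j \<noteq> 0)"
  using assms
proof (induction K arbitrary: J B rule: finite_induct)
  case empty
  then obtain j0 where "j0 \<in> J" by (metis card.empty card_eq_0_iff ex_in_conv less_irrefl)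
  then show ?case by (intro exI[of _ "\<lambda>j. if j = j0 then 1 else 0"]) auto
next
  case (insert x K)
  show ?case
  proof (cases "\<forall>j\<in>J. B x j = 0")
    case True
    from insert.IH[of J B] insert.prems insert.hyps obtain a where
      a: "\<forall>y\<in>K. (\<Sum>j\<in>J. a j * B y j) = 0" "\<exists>j\<in>J. a j \<noteq> 0" by auto
    show ?thesis using a True by (intro exI[of _ a]) auto
  next
    case False
    then obtain j0 where j0: "j0 \<in> J" "B x j0 \<noteq> 0" by auto
    define J' where "J' = J - {j0}"
    define B' where "B' = (\<lambda>y j. B y j - B x j / B x j0 * B y j0)"
    have cJ': "card K < card J'" using insert.prems insert.hyps j0 unfolding J'_def
      by (simp add: card_Diff_singleton)
    from insert.IH[of J' B'] cJ' insert.prems obtain a' where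
      a': "\<forall>y\<in>K. (\<Sum>j\<in>J'. a' j * B' y j) = 0" "\<exists>j\<in>J'. a' j \<noteq> 0"
      unfolding J'_def by auto
    define a where "a = (\<lambda>j. if j = j0 then - (\<Sum>j\<in>J'. a' j * B x j) / B x j0 else a' j)"
    have fJ': "finite J'" using insert.prems unfolding J'_def by auto
    have sum_split: "(\<Sum>j\<in>J. a j * B y j) = a j0 * B y j0 + (\<Sum>j\<in>J'. a' j * B y j)" for y
    proof -
      have "(\<Sum>j\<in>J. a j * B y j) = a j0 * B y j0 + (\<Sum>j\<in>J'. a j * B y j)"
        using j0 insert.prems unfolding J'_def by (simp add: sum.remove)
      moreover have "(\<Sum>j\<in>J'. a j * B y j) = (\<Sum>j\<in>J'. a' j * B y j)"
        by (rule sum.cong) (auto simp: a_def J'_def)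
      ultimately show ?thesis by simp
    qed
    have rowx: "(\<Sum>j\<in>J. a j * B x j) = 0"
      unfolding sum_split[of x] using j0 by (simp add: a_def)
    have rowy: "(\<Sum>j\<in>J. a j * B y j) = 0" if "y \<in> K" for y
    proof -
      have "0 = (\<Sum>j\<in>J'. a' j * B' y j)" using a' that by auto
      also have "\<dots> = (\<Sum>j\<in>J'. a' j * B y j - (B y j0 / B x j0) * (a' j * B x j))"
        unfolding B'_def by (rule sum.cong) (auto simp: algebra_simps)
      also have "\<dots> = (\<Sum>j\<in>J'. a' j * B y j) - (B y j0 / B x j0) * (\<Sum>j\<in>J'. a' j * B x j)"
        by (simp add: sum_subtractf sum_distrib_left)
      also have "\<dots> = (\<Sum>j\<in>J'. a' j * B y j) - (\<Sum>j\<in>J'. a' j * B x j) / B x j0 * B y j0"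
        by simp
      also have "\<dots> = (\<Sum>j\<in>J. a j * B y j)"
        unfolding sum_split[of y] by (simp add: a_def)
      finally show ?thesis by simp
    qed
    obtain j1 where j1: "j1 \<in> J'" "a' j1 \<noteq> 0" using a' by auto
    have "a j1 \<noteq> 0" using j1 unfolding a_def J'_def by auto
    then show ?thesis using rowx rowy j1 unfolding J'_def
      by (intro exI[of _ a]) auto
  qed
qed

lemma lin_indep_cols_card_le_factor:
  fixes M :: "'r \<Rightarrow> 'c \<Rightarrow> complex"
  assumes "lin_indep_cols R M J" "finite J" "finite K"
    and "\<And>r j. r \<in> R \<Longrightarrow> j \<in> J \<Longrightarrow> M r j = (\<Sum>x\<in>K. A r x * B x j)"
  shows "card J \<le> card K"
proof (rule ccontr)
  assume "\<not> card J \<le> card K"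
  then obtain a where a: "\<forall>x\<in>K. (\<Sum>j\<in>J. a j * B x j) = 0" "\<exists>j\<in>J. a j \<noteq> 0"
    using exists_nontrivial_homogeneous_solution[of K J B] assms by auto
  have "\<forall>r\<in>R. (\<Sum>j\<in>J. a j * M r j) = 0"
  proof
    fix r assume r: "r \<in> R"
    have "(\<Sum>j\<in>J. a j * M r j) = (\<Sum>j\<in>J. \<Sum>x\<in>K. a j * (A r x * B x j))"
      using assms(4) r by (simp add: sum_distrib_left)
    also have "\<dots> = (\<Sum>x\<in>K. A r x * (\<Sum>j\<in>J. a j * B x j))"
      by (subst sum.swap) (simp add: sum_distrib_left algebra_simps)
    also have "\<dots> = 0" using a by simp
    finally show "(\<Sum>j\<in>J. a j * M r j) = 0" .
  qed
  then have "\<forall>j\<in>J. a j = 0" using assms(1) unfolding lin_indep_cols_def by blast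
  then show False using a by auto
qed

lemma lin_indep_cols_by_pivot_rows:
  assumes "finite J" and "\<And>j. j \<in> J \<Longrightarrow> \<rho> j \<in> R" and "\<And>j. j \<in> J \<Longrightarrow> M (\<rho> j) j \<noteq> 0"
    and "\<And>j j'. j \<in> J \<Longrightarrow> j' \<in> J \<Longrightarrow> M (\<rho> j) j' \<noteq> 0 \<Longrightarrow> j' = j"
  shows "lin_indep_cols R M J"
  unfolding lin_indep_cols_def
proof (intro allI impI ballI)
  fix a j
  assume zero: "\<forall>r\<in>R. (\<Sum>j\<in>J. a j * M r j) = 0" and j: "j \<in> J"
  have "(\<Sum>j'\<in>J. a j' * M (\<rho> j) j') = a j * M (\<rho> j) j + (\<Sum>j'\<in>J - {j}. a j' * M (\<rho> j) j')"
    by (rule sum.remove[OF assms(1) j])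
  also have "(\<Sum>j'\<in>J - {j}. a j' * M (\<rho> j) j') = 0"
    using assms(4)[OF j] by (intro sum.neutral) auto
  finally have "a j * M (\<rho> j) j = 0" using zero assms(2)[OF j] by simp
  then show "a j = 0" using assms(3)[OF j] by simp
qed

lemma finite_indep_col_cards:
  assumes "finite Cols"
  shows "finite {card J | J. J \<subseteq> Cols \<and> lin_indep_cols R M J}"
proof -
  have "{card J | J. J \<subseteq> Cols \<and> lin_indep_cols R M J} \<subseteq> card ` Pow Cols" by auto
  moreover have "finite (card ` Pow Cols)" using assms by simp
  ultimately show ?thesis by (rule finite_subset)
qed

lemma lin_indep_cols_empty: "lin_indep_cols R M {}"
  unfolding lin_indep_cols_def by simp

lemma mat_rank_leI:
  assumes "finite Cols" "\<And>J. J \<subseteq> Cols \<Longrightarrow> lin_indep_cols R M J \<Longrightarrow> card J \<le> k"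
  shows "mat_rank R Cols M \<le> k"
  unfolding mat_rank_def
  using finite_indep_col_cards[OF assms(1), of R M] assms(2) lin_indep_cols_empty[of R M]
  by (subst Max_le_iff) auto

lemma card_le_mat_rank:
  assumes "finite Cols" "J \<subseteq> Cols" "lin_indep_cols R M J"
  shows "card J \<le> mat_rank R Cols M"
  unfolding mat_rank_def
  using finite_indep_col_cards[OF assms(1), of R M] assms(2,3)
  by (intro Max_ge) auto

lemma mat_rank_le_card:
  assumes "finite Cols" shows "mat_rank R Cols M \<le> card Cols"
  using assms by (intro mat_rank_leI) (auto intro: card_mono)

lemma mat_rank_le_factor:
  assumes "finite Cols" "finite K"
    and "\<And>r j. r \<in> R \<Longrightarrow> j \<in> Cols \<Longrightarrow> M r j = (\<Sum>x\<in>K. A r x * B x j)"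
  shows "mat_rank R Cols M \<le> card K"
proof (rule mat_rank_leI[OF assms(1)])
  fix J assume "J \<subseteq> Cols" "lin_indep_cols R M J"
  then show "card J \<le> card K"
    using assms by (intro lin_indep_cols_card_le_factor[of R M J K A B]) (auto intro: finite_subset)
qed

section \<open>Cuts bound the rank of a contraction\<close>

lemma edge_assignments_bij_PiE:
  "bij_betw (\<lambda>f. restrict f A) (edge_assignments A B) (PiE A (\<lambda>x. {..<B x}))"
proof (rule bij_betw_byWitness[where f' = "\<lambda>h x. if x \<in> A then h x else 0"])
  show "\<forall>f\<in>edge_assignments A B. (\<lambda>x. if x \<in> A then restrict f A x else 0) = f"
    by (auto simp: edge_assignments_def fun_eq_iff)
  show "\<forall>h\<in>PiE A (\<lambda>x. {..<B x}). restrict (\<lambda>x. if x \<in> A then h x else 0) A = h"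
    by (auto simp: PiE_def extensional_def fun_eq_iff)
  show "(\<lambda>f. restrict f A) ` edge_assignments A B \<subseteq> PiE A (\<lambda>x. {..<B x})"
    by (auto simp: edge_assignments_def)
  show "(\<lambda>h x. if x \<in> A then h x else 0) ` PiE A (\<lambda>x. {..<B x}) \<subseteq> edge_assignments A B"
    by (auto simp: edge_assignments_def PiE_iff)
qed

lemma finite_edge_assignments:
  assumes "finite A" shows "finite (edge_assignments A B)"
proof -
  have "finite (PiE A (\<lambda>x. {..<B x}))" using assms by (simp add: finite_PiE)
  then show ?thesis using bij_betw_finite[OF edge_assignments_bij_PiE] by blast
qed

lemma card_edge_assignments:
  assumes "finite A" shows "card (edge_assignments A B) = (\<Prod>x\<in>A. B x)"
  using bij_betw_same_card[OF edge_assignments_bij_PiE, of A B] assms by (simp add: card_PiE)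

definition restrict0 :: "'e set \<Rightarrow> ('e \<Rightarrow> nat) \<Rightarrow> 'e \<Rightarrow> nat" where
  "restrict0 A W = (\<lambda>e. if e \<in> A then W e else 0)"

lemma restrict0_eqD: "restrict0 C W = X \<Longrightarrow> e \<in> C \<Longrightarrow> W e = X e"
  unfolding restrict0_def by (drule fun_cong[of _ _ e]) simp

lemma bij_betw_restrict0_pair:
  "bij_betw (\<lambda>W. (restrict0 A1 W, restrict0 A2 W))
     {W \<in> edge_assignments (A1 \<union> A2) c. restrict0 (A1 \<inter> A2) W = X \<and>
        P (restrict0 A1 W) \<and> Q (restrict0 A2 W)}
     ({W1 \<in> edge_assignments A1 c. restrict0 (A1 \<inter> A2) W1 = X \<and> P W1} \<times>
      {W2 \<in> edge_assignments A2 c. restrict0 (A1 \<inter> A2) W2 = X \<and> Q W2})"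
    (is "bij_betw ?split ?G (?G1 \<times> ?G2)")
proof -
  define glue where "glue = (\<lambda>(W1::'a \<Rightarrow> nat, W2::'a \<Rightarrow> nat) e. if e \<in> A1 then W1 e else W2 e)"
  have glue_restrict: "restrict0 A1 (glue (W1, W2)) = W1" "restrict0 A2 (glue (W1, W2)) = W2"
    if "(W1, W2) \<in> ?G1 \<times> ?G2" for W1 W2
  proof -
    have agree: "W1 e = W2 e" if "e \<in> A1 \<inter> A2" for e
      using that \<open>(W1, W2) \<in> ?G1 \<times> ?G2\<close>
        restrict0_eqD[of "A1 \<inter> A2" W1 X] restrict0_eqD[of "A1 \<inter> A2" W2 X]
      by auto
    show "restrict0 A1 (glue (W1, W2)) = W1" "restrict0 A2 (glue (W1, W2)) = W2"
      using that agree by (auto simp: glue_def restrict0_def edge_assignments_def fun_eq_iff)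
  qed
  show ?thesis
  proof (rule bij_betw_byWitness[where f' = glue])
    show "\<forall>W\<in>?G. glue (?split W) = W"
      by (auto simp: glue_def restrict0_def edge_assignments_def fun_eq_iff)
    show "\<forall>p\<in>?G1 \<times> ?G2. ?split (glue p) = p"
      using glue_restrict by auto
    show "?split ` ?G \<subseteq> ?G1 \<times> ?G2"
      by (auto simp: restrict0_def edge_assignments_def fun_eq_iff)
    show "glue ` (?G1 \<times> ?G2) \<subseteq> ?G"
    proof (rule image_subsetI)
      fix p assume "p \<in> ?G1 \<times> ?G2"
      then obtain W1 W2 where p: "p = (W1, W2)" and W: "(W1, W2) \<in> ?G1 \<times> ?G2"
        by (cases p) auto
      have "glue (W1, W2) \<in> edge_assignments (A1 \<union> A2) c"
        using W by (auto simp: glue_def edge_assignments_def)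
      moreover have "restrict0 (A1 \<inter> A2) (glue (W1, W2)) = restrict0 (A1 \<inter> A2) W1"
        by (auto simp: glue_def restrict0_def)
      ultimately show "glue p \<in> ?G" using glue_restrict[OF W] W p by simp
    qed
  qed
qed

lemma sum_edge_assignments_glue:
  fixes f g :: "('e \<Rightarrow> nat) \<Rightarrow> 'a :: comm_semiring_1"
  assumes "finite A1" "finite A2"
  shows "(\<Sum>W\<in>{W \<in> edge_assignments (A1 \<union> A2) c. P (restrict0 A1 W) \<and> Q (restrict0 A2 W)}.
            f (restrict0 A1 W) * g (restrict0 A2 W)) =
         (\<Sum>X\<in>edge_assignments (A1 \<inter> A2) c.
            (\<Sum>W1\<in>{W1 \<in> edge_assignments A1 c. restrict0 (A1 \<inter> A2) W1 = X \<and> P W1}. f W1) *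
            (\<Sum>W2\<in>{W2 \<in> edge_assignments A2 c. restrict0 (A1 \<inter> A2) W2 = X \<and> Q W2}. g W2))"
    (is "(\<Sum>W\<in>?G. ?h W) = (\<Sum>X\<in>_. (\<Sum>W1\<in>?G1 X. _) * (\<Sum>W2\<in>?G2 X. _))")
proof -
  have "finite ?G"
    using assms finite_edge_assignments[of "A1 \<union> A2" c] by (auto intro: finite_subset)
  then have "(\<Sum>W\<in>?G. ?h W) =
      (\<Sum>X\<in>edge_assignments (A1 \<inter> A2) c. \<Sum>W\<in>{W \<in> ?G. restrict0 (A1 \<inter> A2) W = X}. ?h W)"
    using assms
    by (intro sum.group[symmetric] finite_edge_assignments)
       (auto simp: restrict0_def edge_assignments_def)
  also have "\<dots> = (\<Sum>X\<in>edge_assignments (A1 \<inter> A2) c. \<Sum>p\<in>?G1 X \<times> ?G2 X. f (fst p) * g (snd p))"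
  proof (rule sum.cong[OF refl])
    fix X
    have "{W \<in> ?G. restrict0 (A1 \<inter> A2) W = X} = {W \<in> edge_assignments (A1 \<union> A2) c.
        restrict0 (A1 \<inter> A2) W = X \<and> P (restrict0 A1 W) \<and> Q (restrict0 A2 W)}" by auto
    then show "(\<Sum>W\<in>{W \<in> ?G. restrict0 (A1 \<inter> A2) W = X}. ?h W) =
        (\<Sum>p\<in>?G1 X \<times> ?G2 X. f (fst p) * g (snd p))"
      using sum.reindex_bij_betw[OF bij_betw_restrict0_pair, of "\<lambda>p. f (fst p) * g (snd p)"] by simp
  qed
  finally show ?thesis
    by (simp add: sum_product sum.cartesian_product case_prod_beta)
qed

lemma incident_ends_at:
  "incident E ends e u \<longleftrightarrow> (\<exists>b. (e, b) \<in> ends_at E ends u)"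
  unfolding incident_def ends_at_def endpt_def by auto

lemma ends_at_touches:
  "(e, b) \<in> ends_at E ends v \<Longrightarrow> e \<in> E \<and> (fst (ends e) = v \<or> snd (ends e) = v)"
  by (auto simp: ends_at_def endpt_def split: if_splits)

lemma vertex_product_restrict0:
  assumes "\<And>v e b. v \<in> U \<Longrightarrow> (e, b) \<in> ends_at E ends v \<Longrightarrow> e \<in> A"
  shows "(\<Prod>v\<in>U. Tn v (\<lambda>(e, b). if (e, b) \<in> ends_at E ends v then W e else 0)) =
    (\<Prod>v\<in>U. Tn v (\<lambda>(e, b). if (e, b) \<in> ends_at E ends v then restrict0 A W e else 0))"
  using assms
  by (intro prod.cong[OF refl] arg_cong[where f = "Tn _"]) (auto simp: restrict0_def fun_eq_iff)

lemma contract_factors_through_cut: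
  assumes tmpl: "tn_template S T V E ends c" and cut: "is_edge_cut S T V E ends C"
  shows "\<exists>Af Bf. \<forall>IT IS. contract S T V E ends c Tn IT IS =
            (\<Sum>X\<in>edge_assignments C c. Af IT X * Bf X IS)"
proof -
  obtain Sb Tb where sb: "Sb \<inter> Tb = {}" "Sb \<union> Tb = S \<union> T \<union> V" "S \<subseteq> Sb" "T \<subseteq> Tb"
    and C_def: "C = {e\<in>E. (fst (ends e) \<in> Sb \<and> snd (ends e) \<in> Tb) \<or>
                    (fst (ends e) \<in> Tb \<and> snd (ends e) \<in> Sb)}"
    using cut unfolding is_edge_cut_def by blast
  have finE: "finite E" and finV: "finite V" using tmpl unfolding tn_template_def by auto
  have endsN: "fst (ends e) \<in> Sb \<union> Tb" "snd (ends e) \<in> Sb \<union> Tb" if "e \<in> E" for e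
    using tmpl that sb(2) unfolding tn_template_def by auto
  define A1 where "A1 = {e\<in>E. fst (ends e) \<in> Sb \<or> snd (ends e) \<in> Sb}"
  define A2 where "A2 = {e\<in>E. fst (ends e) \<in> Tb \<or> snd (ends e) \<in> Tb}"
  have CA: "C = A1 \<inter> A2" unfolding C_def A1_def A2_def using endsN sb(1) by blast
  have EA: "E = A1 \<union> A2" unfolding A1_def A2_def using endsN by blast
  have finA: "finite A1" "finite A2" using finE unfolding A1_def A2_def by auto
  define f where "f = (\<lambda>v W. Tn v (\<lambda>(e, b). if (e, b) \<in> ends_at E ends v then W e else 0))"
  define bS where "bS = (\<lambda>IS W. \<forall>u\<in>S. \<forall>e. incident E ends e u \<longrightarrow> W e = (IS::'a\<Rightarrow>nat) u)"
  define bT where "bT = (\<lambda>IT W. \<forall>u\<in>T. \<forall>e. incident E ends e u \<longrightarrow> W e = (IT::'a\<Rightarrow>nat) u)"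
  define P1 where "P1 = (\<lambda>W. \<Prod>v\<in>V \<inter> Sb. f v W)"
  define P2 where "P2 = (\<lambda>W. \<Prod>v\<in>V \<inter> Tb. f v W)"
  define Bf where
    "Bf = (\<lambda>X IS. \<Sum>W1\<in>{W1 \<in> edge_assignments A1 c. restrict0 C W1 = X \<and> bS IS W1}. P1 W1)"
  define Af where
    "Af = (\<lambda>IT X. \<Sum>W2\<in>{W2 \<in> edge_assignments A2 c. restrict0 C W2 = X \<and> bT IT W2}. P2 W2)"
  have P1_local: "P1 W = P1 (restrict0 A1 W)" for W
    unfolding P1_def f_def
    by (rule vertex_product_restrict0) (auto simp: A1_def dest: ends_at_touches)
  have P2_local: "P2 W = P2 (restrict0 A2 W)" for W
    unfolding P2_def f_def
    by (rule vertex_product_restrict0) (auto simp: A2_def dest: ends_at_touches)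
  have P_split: "(\<Prod>v\<in>V. f v W) = P1 W * P2 W" for W
  proof -
    have "V = (V \<inter> Sb) \<union> (V \<inter> Tb)" using sb(2) by blast
    then have "(\<Prod>v\<in>V. f v W) = (\<Prod>v\<in>(V \<inter> Sb) \<union> (V \<inter> Tb). f v W)" by simp
    also have "\<dots> = P1 W * P2 W" unfolding P1_def P2_def
      by (rule prod.union_disjoint) (use finV sb(1) in auto)
    finally show ?thesis .
  qed
  have bS_local: "bS IS W = bS IS (restrict0 A1 W)" for IS W
    using sb(3) unfolding bS_def restrict0_def incident_def A1_def by auto
  have bT_local: "bT IT W = bT IT (restrict0 A2 W)" for IT W
    using sb(4) unfolding bT_def restrict0_def incident_def A2_def by auto
  have "contract S T V E ends c Tn IT IS = (\<Sum>X\<in>edge_assignments C c. Af IT X * Bf X IS)" for IT IS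
  proof -
    have "contract S T V E ends c Tn IT IS =
        (\<Sum>W\<in>{W \<in> edge_assignments (A1 \<union> A2) c. bS IS (restrict0 A1 W) \<and> bT IT (restrict0 A2 W)}.
          P1 (restrict0 A1 W) * P2 (restrict0 A2 W))"
      unfolding contract_def EA[symmetric] bS_local[symmetric] bT_local[symmetric]
        P1_local[symmetric] P2_local[symmetric] P_split[symmetric]
      by (simp add: bS_def bT_def f_def)
    also have "\<dots> = (\<Sum>X\<in>edge_assignments C c. Bf X IS * Af IT X)"
      unfolding sum_edge_assignments_glue[OF finA] Af_def Bf_def CA ..
    finally show ?thesis by (simp add: mult.commute)
  qed
  then show ?thesis by blast
qed

lemma tn_template_port_incident:
  assumes "tn_template S T V E ends c" "u \<in> S \<union> T"
  shows "\<exists>e. incident E ends e u"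
proof -
  have "card (ends_at E ends u) = 1" using assms unfolding tn_template_def by auto
  then obtain p where "p \<in> ends_at E ends u" by (metis card_1_singletonE insertI1)
  then show ?thesis by (cases p) (auto simp: incident_ends_at)
qed

lemma finite_port_assignments:
  assumes "tn_template S T V E ends c" "P \<subseteq> S \<union> T"
  shows "finite (port_assignments E ends c P)"
proof -
  have "finite (S \<union> T)" "finite E" using assms(1) unfolding tn_template_def by auto
  then have fin: "finite P" "finite E" using finite_subset[OF assms(2)] by auto
  have "port_assignments E ends c P \<subseteq> edge_assignments P (\<lambda>_. \<Sum>e\<in>E. c e)"
  proof (clarsimp simp: port_assignments_def edge_assignments_def)
    fix I x assume I: "\<forall>u\<in>P. \<forall>e. incident E ends e u \<longrightarrow> I u < c e" and x: "x \<in> P"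
    obtain e where e: "incident E ends e x"
      using tn_template_port_incident[OF assms(1)] x assms(2) by blast
    then have "c e \<le> (\<Sum>e\<in>E. c e)" using fin by (intro member_le_sum) (auto simp: incident_def)
    then show "I x < (\<Sum>e\<in>E. c e)" using I x e by fastforce
  qed
  then show ?thesis using finite_edge_assignments[OF fin(1)] by (rule finite_subset)
qed

lemma mat_rank_contract_le_cut:
  assumes tmpl: "tn_template S T V E ends c" and cut: "is_edge_cut S T V E ends C"
  shows "mat_rank (port_assignments E ends c T) (port_assignments E ends c S)
           (contract S T V E ends c Tn) \<le> (\<Prod>e\<in>C. c e)"
proof -
  obtain Af Bf where fac: "\<And>IT IS. contract S T V E ends c Tn IT IS =
      (\<Sum>X\<in>edge_assignments C c. Af IT X * Bf X IS)"
    using contract_factors_through_cut[OF assms] by blast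
  have "C \<subseteq> E" using cut unfolding is_edge_cut_def by auto
  then have finC: "finite C" using tmpl finite_subset unfolding tn_template_def by auto
  have "mat_rank (port_assignments E ends c T) (port_assignments E ends c S)
           (contract S T V E ends c Tn) \<le> card (edge_assignments C c)"
    by (rule mat_rank_le_factor[OF finite_port_assignments[OF tmpl]
          finite_edge_assignments[OF finC]])
      (auto simp: fac)
  then show ?thesis using card_edge_assignments[OF finC] by simp
qed

section \<open>Integral max-flow min-cut\<close>

locale flow_network =
  fixes S T V :: "'v set" and E :: "'e set" and ends :: "'e \<Rightarrow> 'v \<times> 'v" and m :: "'e \<Rightarrow> nat"
  assumes finS: "finite S" and finT: "finite T" and finV: "finite V" and finE: "finite E"
    and disjST: "S \<inter> T = {}" and disjSV: "S \<inter> V = {}" and disjTV: "T \<inter> V = {}"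
    and endsN: "\<And>e. e \<in> E \<Longrightarrow> fst (ends e) \<in> S \<union> T \<union> V \<and> snd (ends e) \<in> S \<union> T \<union> V"
begin

definition net_out :: "('e \<Rightarrow> int) \<Rightarrow> 'v \<Rightarrow> int" where
  "net_out g x =
     (\<Sum>e\<in>E. (if fst (ends e) = x then g e else 0) - (if snd (ends e) = x then g e else 0))"

definition feasible :: "('e \<Rightarrow> int) \<Rightarrow> bool" where
  "feasible g \<longleftrightarrow> (\<forall>e. e \<notin> E \<longrightarrow> g e = 0) \<and> (\<forall>e\<in>E. \<bar>g e\<bar> \<le> int (m e)) \<and>
     (\<forall>v\<in>V. net_out g v = 0) \<and> (\<forall>s\<in>S. net_out g s \<ge> 0) \<and> (\<forall>t\<in>T. net_out g t \<le> 0)"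

definition flow_value :: "('e \<Rightarrow> int) \<Rightarrow> int" where
  "flow_value g = (\<Sum>s\<in>S. net_out g s)"

text \<open>Flows are signed: g e > 0 sends flow from fst (ends e) to snd (ends e). The dart (e, b)
  traverses e in this direction iff b; it is residual if one more unit can be pushed along it.\<close>
definition dart_tail :: "'e \<times> bool \<Rightarrow> 'v" where
  "dart_tail d = (if snd d then fst (ends (fst d)) else snd (ends (fst d)))"
definition dart_head :: "'e \<times> bool \<Rightarrow> 'v" where
  "dart_head d = (if snd d then snd (ends (fst d)) else fst (ends (fst d)))"
definition dart_sign :: "'e \<times> bool \<Rightarrow> int" where
  "dart_sign d = (if snd d then 1 else -1)"
definition dart_flow :: "'e \<times> bool \<Rightarrow> 'e \<Rightarrow> int" where
  "dart_flow d = (\<lambda>e. if e = fst d then dart_sign d else 0)"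
definition residual :: "('e \<Rightarrow> int) \<Rightarrow> 'e \<times> bool \<Rightarrow> bool" where
  "residual g d \<longleftrightarrow> fst d \<in> E \<and> g (fst d) * dart_sign d < int (m (fst d))"

fun walk :: "'v \<Rightarrow> ('e \<times> bool) list \<Rightarrow> 'v \<Rightarrow> bool" where
  "walk x [] y \<longleftrightarrow> x = y"
| "walk x (d # ds) y \<longleftrightarrow> dart_tail d = x \<and> walk (dart_head d) ds y"

fun walk_flow :: "('e \<times> bool) list \<Rightarrow> 'e \<Rightarrow> int" where
  "walk_flow [] = (\<lambda>e. 0)"
| "walk_flow (d # ds) = (\<lambda>e. dart_flow d e + walk_flow ds e)"

lemma walk_append: "walk x (as @ bs) z \<longleftrightarrow> (\<exists>y. walk x as y \<and> walk y bs z)"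
  by (induction as arbitrary: x) auto

lemma net_out_add: "net_out (\<lambda>e. g e + h e) x = net_out g x + net_out h x"
  unfolding net_out_def by (simp add: sum.distrib[symmetric]) (rule sum.cong; auto)

lemma net_out_zero: "net_out (\<lambda>e. 0) x = 0"
  unfolding net_out_def by simp

lemma net_out_dart_flow:
  assumes "fst d \<in> E"
  shows "net_out (dart_flow d) x = of_bool (x = dart_tail d) - of_bool (x = dart_head d)"
proof -
  have "net_out (dart_flow d) x = (\<Sum>e\<in>E. if e = fst d then
      (if fst (ends e) = x then dart_sign d else 0) - (if snd (ends e) = x then dart_sign d else 0)
      else 0)"
    unfolding net_out_def dart_flow_def by (rule sum.cong) auto
  also have "\<dots> = (if fst (ends (fst d)) = x then dart_sign d else 0) -
      (if snd (ends (fst d)) = x then dart_sign d else 0)"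
    using assms finE by simp
  also have "\<dots> = of_bool (x = dart_tail d) - of_bool (x = dart_head d)"
    unfolding dart_sign_def dart_tail_def dart_head_def by auto
  finally show ?thesis .
qed

lemma net_out_walk_flow:
  assumes "walk x ds y" "\<forall>d\<in>set ds. fst d \<in> E"
  shows "net_out (walk_flow ds) z = of_bool (z = x) - of_bool (z = y)"
  using assms
proof (induction ds arbitrary: x)
  case Nil then show ?case by (simp add: net_out_zero)
next
  case (Cons d ds)
  have "net_out (walk_flow (d # ds)) z = net_out (dart_flow d) z + net_out (walk_flow ds) z"
    by (simp add: net_out_add)
  also have "\<dots> = (of_bool (z = dart_tail d) - of_bool (z = dart_head d)) +
      (of_bool (z = dart_head d) - of_bool (z = y))"
    using Cons.IH[of "dart_head d"] Cons.prems net_out_dart_flow[of d z] by simp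
  also have "\<dots> = of_bool (z = x) - of_bool (z = y)" using Cons.prems by simp
  finally show ?case .
qed

lemma walk_flow_notin: "e \<notin> fst ` set ds \<Longrightarrow> walk_flow ds e = 0"
  by (induction ds) (auto simp: dart_flow_def)

lemma walk_flow_capacity:
  assumes "distinct (map fst ds)" "\<forall>d\<in>set ds. residual g d" "\<forall>e\<in>E. \<bar>g e\<bar> \<le> int (m e)" "e \<in> E"
  shows "\<bar>g e + walk_flow ds e\<bar> \<le> int (m e)"
  using assms
proof (induction ds)
  case Nil then show ?case by simp
next
  case (Cons d ds)
  show ?case
  proof (cases "e = fst d")
    case True
    then have "walk_flow ds e = 0" using Cons.prems(1) by (intro walk_flow_notin) auto
    moreover have "g e * dart_sign d < int (m e)"
      using Cons.prems(2) True unfolding residual_def by auto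
    ultimately show ?thesis using True Cons.prems(3,4)
      by (auto simp: dart_flow_def dart_sign_def split: if_splits)
  next
    case False
    then show ?thesis using Cons by (simp add: dart_flow_def)
  qed
qed

text \<open>Walks use distinct edges, so that augmenting along one respects the capacities.\<close>
definition residual_reach :: "('e \<Rightarrow> int) \<Rightarrow> 'v set" where
  "residual_reach g =
     {y. \<exists>s\<in>S. \<exists>ds. walk s ds y \<and> distinct (map fst ds) \<and> (\<forall>d\<in>set ds. residual g d)}"

lemma sources_residual_reach: "S \<subseteq> residual_reach g"
  unfolding residual_reach_def by (auto intro!: exI[of _ "[]"])

lemma dart_head_eq: "fst d = fst d' \<Longrightarrow> dart_tail d' \<noteq> dart_head d \<Longrightarrow> dart_head d' = dart_head d"
  unfolding dart_tail_def dart_head_def by (cases "snd d"; cases "snd d'") auto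

lemma residual_reach_closed:
  assumes "y \<in> residual_reach g" "residual g d" "dart_tail d = y"
  shows "dart_head d \<in> residual_reach g"
proof -
  obtain s ds where s: "s \<in> S" "walk s ds y" "distinct (map fst ds)" "\<forall>d\<in>set ds. residual g d"
    using assms(1) unfolding residual_reach_def by auto
  show ?thesis
  proof (cases "fst d \<in> fst ` set ds")
    case False
    have "walk s (ds @ [d]) (dart_head d)" using s(2) assms(3) by (auto simp: walk_append)
    moreover have "distinct (map fst (ds @ [d]))" using s(3) False by auto
    ultimately show ?thesis using s(1,4) assms(2) unfolding residual_reach_def by fastforce
  next
    case True
    \<comment> \<open>the walk already uses the edge of d; truncating it there reaches an end of that edge\<close>
    then obtain d' where d': "d' \<in> set ds" "fst d' = fst d" by auto
    then obtain as bs where ds: "ds = as @ d' # bs" by (meson split_list)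
    have w1: "walk s as (dart_tail d')" using s(2) ds by (auto simp: walk_append)
    have dis: "distinct (map fst (as @ [d']))" using s(3) ds by auto
    have res: "\<forall>d\<in>set (as @ [d']). residual g d" using s(4) ds by auto
    show ?thesis
    proof (cases "dart_tail d' = dart_head d")
      case True
      have "distinct (map fst as)" using dis by simp
      then show ?thesis using s(1) w1 True res unfolding residual_reach_def by fastforce
    next
      case False
      then have "dart_head d' = dart_head d" using dart_head_eq[OF d'(2)[symmetric]] by simp
      then have "walk s (as @ [d']) (dart_head d)" using w1 by (auto simp: walk_append)
      then show ?thesis using s(1) dis res unfolding residual_reach_def by blast
    qed
  qed
qed

definition cut_edges :: "'v set \<Rightarrow> 'v set \<Rightarrow> 'e set" where
  "cut_edges Sb Tb = {e\<in>E. (fst (ends e) \<in> Sb \<and> snd (ends e) \<in> Tb) \<or>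
                          (fst (ends e) \<in> Tb \<and> snd (ends e) \<in> Sb)}"

lemma net_out_le_total_capacity:
  assumes "feasible g" shows "net_out g x \<le> (\<Sum>e\<in>E. int (m e))"
  unfolding net_out_def
proof (rule sum_mono)
  fix e assume e: "e \<in> E"
  have "\<bar>g e\<bar> \<le> int (m e)" using assms e unfolding feasible_def by auto
  then show "(if fst (ends e) = x then g e else 0) - (if snd (ends e) = x then g e else 0) \<le>
      int (m e)"
    by auto
qed

lemma flow_value_nonneg: "feasible g \<Longrightarrow> flow_value g \<ge> 0"
  unfolding flow_value_def feasible_def by (auto intro: sum_nonneg)

lemma feasible_zero: "feasible (\<lambda>e. 0)"
  unfolding feasible_def by (simp add: net_out_zero)

lemma augment_feasible:
  assumes g: "feasible g" and st: "s \<in> S" "t \<in> T" and w: "walk s ds t" "distinct (map fst ds)"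
    "\<forall>d\<in>set ds. residual g d"
  shows "feasible (\<lambda>e. g e + walk_flow ds e) \<and>
    flow_value (\<lambda>e. g e + walk_flow ds e) = flow_value g + 1"
proof -
  have dE: "\<forall>d\<in>set ds. fst d \<in> E" using w(3) unfolding residual_def by auto
  have no: "net_out (\<lambda>e. g e + walk_flow ds e) x =
      net_out g x + (of_bool (x = s) - of_bool (x = t))" for x
    by (simp add: net_out_add net_out_walk_flow[OF w(1) dE])
  have sdiff: "s \<noteq> t" using st disjST by auto
  have f1: "\<forall>e. e \<notin> E \<longrightarrow> g e + walk_flow ds e = 0"
    using g dE unfolding feasible_def by (auto intro!: walk_flow_notin)
  have f2: "\<forall>e\<in>E. \<bar>g e + walk_flow ds e\<bar> \<le> int (m e)"
    using g w unfolding feasible_def by (auto intro!: walk_flow_capacity)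
  have f3: "\<forall>v\<in>V. net_out (\<lambda>e. g e + walk_flow ds e) v = 0"
    using g st disjSV disjTV unfolding feasible_def by (auto simp: no)
  have f4: "\<forall>x\<in>S. net_out (\<lambda>e. g e + walk_flow ds e) x \<ge> 0"
    using g st disjST unfolding feasible_def by (auto simp: no)
  have f5: "\<forall>x\<in>T. net_out (\<lambda>e. g e + walk_flow ds e) x \<le> 0"
    using g st disjST unfolding feasible_def by (auto simp: no)
  have "flow_value (\<lambda>e. g e + walk_flow ds e) =
      (\<Sum>x\<in>S. net_out g x + (of_bool (x = s) - of_bool (x = t)))"
    unfolding flow_value_def by (simp add: no)
  also have "\<dots> = flow_value g + ((\<Sum>x\<in>S. of_bool (x = s)) - (\<Sum>x\<in>S. of_bool (x = t)))"
    unfolding flow_value_def by (simp add: sum.distrib sum_subtractf)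
  also have "(\<Sum>x\<in>S. (of_bool (x = s) :: int)) = 1"
    using st finS by (simp add: of_bool_def)
  also have "(\<Sum>x\<in>S. (of_bool (x = t) :: int)) = 0"
    using st disjST finS by (auto simp: of_bool_def)
  finally show ?thesis using f1 f2 f3 f4 f5 unfolding feasible_def by simp
qed
lemma exists_maximum_flow:
  obtains g where "feasible g" "\<And>h. feasible h \<Longrightarrow> flow_value h \<le> flow_value g"
proof -
  define M where "M = (\<Sum>e\<in>E. int (m e))"
  have bound: "nat (flow_value g) < nat (int (card S) * M) + 1" if "feasible g" for g
  proof -
    have "flow_value g \<le> of_nat (card S) * M"
      unfolding flow_value_def M_def
      by (rule sum_bounded_above) (use net_out_le_total_capacity[OF that] in auto)
    then show ?thesis by linarith
  qed
  obtain g where g: "feasible g"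
    and gmax: "\<And>h. feasible h \<Longrightarrow> nat (flow_value h) \<le> nat (flow_value g)"
    using ex_has_greatest_nat[of feasible "\<lambda>_. 0" "\<lambda>g. nat (flow_value g)"
        "nat (int (card S) * M) + 1"]
      feasible_zero bound by blast
  have "flow_value h \<le> flow_value g" if "feasible h" for h
    using gmax[OF that] flow_value_nonneg[OF g] by (simp add: nat_le_eq_zle)
  then show ?thesis using that g by blast
qed

lemma maximum_flow_residual_reach:
  assumes g: "feasible g" and gmax: "\<And>h. feasible h \<Longrightarrow> flow_value h \<le> flow_value g"
  shows "residual_reach g \<inter> T = {}"
proof -
  have "t \<notin> residual_reach g" if "t \<in> T" for t
  proof
    assume "t \<in> residual_reach g"
    then obtain s ds where "s \<in> S" "walk s ds t" "distinct (map fst ds)" "\<forall>d\<in>set ds. residual g d"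
      unfolding residual_reach_def by auto
    then have "feasible (\<lambda>e. g e + walk_flow ds e)"
      and "flow_value (\<lambda>e. g e + walk_flow ds e) = flow_value g + 1"
      using augment_feasible[OF g _ that] by auto
    then show False using gmax by fastforce
  qed
  then show ?thesis by blast
qed

lemma flow_value_eq_boundary_flow:
  assumes g: "feasible g" and A: "S \<subseteq> A" "A \<subseteq> S \<union> V"
  shows "flow_value g =
    (\<Sum>e\<in>E. (if fst (ends e) \<in> A then g e else 0) - (if snd (ends e) \<in> A then g e else 0))"
proof -
  have finA: "finite A" using A(2) finS finV finite_subset by auto
  have "(\<Sum>x\<in>A. net_out g x) = (\<Sum>x\<in>A - S. net_out g x) + (\<Sum>x\<in>S. net_out g x)"
    by (rule sum.subset_diff[OF A(1) finA])
  moreover have "(\<Sum>x\<in>A - S. net_out g x) = 0"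
    using g A(2) unfolding feasible_def by (intro sum.neutral) auto
  ultimately have "flow_value g = (\<Sum>x\<in>A. net_out g x)" unfolding flow_value_def by simp
  also have "\<dots> =
      (\<Sum>e\<in>E. (if fst (ends e) \<in> A then g e else 0) - (if snd (ends e) \<in> A then g e else 0))"
    unfolding net_out_def by (subst sum.swap) (simp add: sum_subtractf finA)
  finally show ?thesis .
qed

text \<open>An edge leaving the residual reach is saturated forwards, one entering it backwards.\<close>
lemma residual_reach_boundary_flow:
  assumes g: "feasible g" and e: "e \<in> E"
  shows "(if fst (ends e) \<in> residual_reach g then g e else 0) -
           (if snd (ends e) \<in> residual_reach g then g e else 0) =
         (if (fst (ends e) \<in> residual_reach g) \<noteq> (snd (ends e) \<in> residual_reach g)
          then int (m e) else 0)"
proof -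
  have cap: "\<bar>g e\<bar> \<le> int (m e)" using g e unfolding feasible_def by auto
  have "g e = int (m e)" if "fst (ends e) \<in> residual_reach g" "snd (ends e) \<notin> residual_reach g"
  proof (rule ccontr)
    assume "g e \<noteq> int (m e)"
    then have "residual g (e, True)" using cap e unfolding residual_def dart_sign_def by auto
    then show False using residual_reach_closed[of _ g "(e, True)"] that
      unfolding dart_tail_def dart_head_def by auto
  qed
  moreover have "- g e = int (m e)"
    if "fst (ends e) \<notin> residual_reach g" "snd (ends e) \<in> residual_reach g"
  proof (rule ccontr)
    assume "- g e \<noteq> int (m e)"
    then have "residual g (e, False)" using cap e unfolding residual_def dart_sign_def by auto
    then show False using residual_reach_closed[of _ g "(e, False)"] that
      unfolding dart_tail_def dart_head_def by auto
  qed
  ultimately show ?thesis by auto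
qed

lemma max_flow_min_cut:
  "\<exists>g Sb Tb. feasible g \<and> Sb \<inter> Tb = {} \<and> Sb \<union> Tb = S \<union> T \<union> V \<and> S \<subseteq> Sb \<and> T \<subseteq> Tb \<and>
     flow_value g = (\<Sum>e\<in>cut_edges Sb Tb. int (m e))"
proof -
  obtain g where g: "feasible g" and gmax: "\<And>h. feasible h \<Longrightarrow> flow_value h \<le> flow_value g"
    using exists_maximum_flow by blast
  define R where "R = residual_reach g"
  define Sb where "Sb = R \<inter> (S \<union> T \<union> V)"
  define Tb where "Tb = (S \<union> T \<union> V) - R"
  have RT: "R \<inter> T = {}" unfolding R_def by (rule maximum_flow_residual_reach[OF g gmax])
  have SSb: "S \<subseteq> Sb" unfolding Sb_def R_def using sources_residual_reach by auto
  have TTb: "T \<subseteq> Tb" unfolding Tb_def using RT by auto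
  have in_Sb: "fst (ends e) \<in> Sb \<longleftrightarrow> fst (ends e) \<in> R" "snd (ends e) \<in> Sb \<longleftrightarrow> snd (ends e) \<in> R"
    if "e \<in> E" for e
    using endsN[OF that] unfolding Sb_def by auto
  have "flow_value g =
      (\<Sum>e\<in>E. (if fst (ends e) \<in> Sb then g e else 0) - (if snd (ends e) \<in> Sb then g e else 0))"
    using RT by (intro flow_value_eq_boundary_flow[OF g SSb]) (auto simp: Sb_def)
  also have "\<dots> = (\<Sum>e\<in>E. if e \<in> cut_edges Sb Tb then int (m e) else 0)"
  proof (rule sum.cong[OF refl])
    fix e assume e: "e \<in> E"
    have "e \<in> cut_edges Sb Tb \<longleftrightarrow> (fst (ends e) \<in> R) \<noteq> (snd (ends e) \<in> R)"
      using e endsN[OF e] unfolding cut_edges_def Sb_def Tb_def by auto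
    then show "(if fst (ends e) \<in> Sb then g e else 0) - (if snd (ends e) \<in> Sb then g e else 0) =
        (if e \<in> cut_edges Sb Tb then int (m e) else 0)"
      using residual_reach_boundary_flow[OF g e] in_Sb[OF e] unfolding R_def by simp
  qed
  also have "\<dots> = (\<Sum>e\<in>cut_edges Sb Tb. int (m e))"
    unfolding cut_edges_def using finE by (simp add: sum.inter_filter)
  finally have "flow_value g = (\<Sum>e\<in>cut_edges Sb Tb. int (m e))" .
  moreover have "Sb \<inter> Tb = {}" "Sb \<union> Tb = S \<union> T \<union> V" unfolding Sb_def Tb_def by auto
  ultimately show ?thesis using g SSb TTb by blast
qed

end

section \<open>Decomposing an integral flow into unit paths\<close>

locale unit_flow = flow_network S T V E ends m
  for S T V :: "'v set" and E :: "'e set" and ends :: "'e \<Rightarrow> 'v \<times> 'v" and m :: "'e \<Rightarrow> nat" +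
  fixes g :: "'e \<Rightarrow> int"
  assumes deg: "\<And>x. x \<in> S \<union> T \<Longrightarrow> card (ends_at E ends x) = 1"
    and gfeas: "feasible g"
begin

text \<open>The flow on e consists of the units (e, i), i < nunits e, running from utail e to uhead e.\<close>
definition nunits :: "'e \<Rightarrow> nat" where
  "nunits e = nat \<bar>g e\<bar>"
definition utail :: "'e \<Rightarrow> 'v" where
  "utail e = (if g e > 0 then fst (ends e) else snd (ends e))"
definition uhead :: "'e \<Rightarrow> 'v" where
  "uhead e = (if g e > 0 then snd (ends e) else fst (ends e))"
definition flow_units :: "('e \<times> nat) set" where
  "flow_units = {(e, i). e \<in> E \<and> i < nunits e}"
definition units_in :: "'v \<Rightarrow> ('e \<times> nat) set" where
  "units_in v = {u \<in> flow_units. uhead (fst u) = v}"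
definition units_out :: "'v \<Rightarrow> ('e \<times> nat) set" where
  "units_out v = {u \<in> flow_units. utail (fst u) = v}"

lemma finite_flow_units: "finite flow_units"
proof -
  have "flow_units = Sigma E (\<lambda>e. {..<nunits e})" unfolding flow_units_def by auto
  then show ?thesis using finE by auto
qed

lemma flow_unit_edge: "u \<in> flow_units \<Longrightarrow> fst u \<in> E \<and> snd u < nunits (fst u)"
  unfolding flow_units_def by auto

lemma nunits_le_m: "e \<in> E \<Longrightarrow> nunits e \<le> m e"
  using gfeas unfolding feasible_def nunits_def by fastforce

lemma units_in_incident: "u \<in> units_in v \<Longrightarrow> incident E ends (fst u) v"
  unfolding units_in_def flow_units_def uhead_def incident_def by (auto split: if_splits)

lemma units_out_incident: "u \<in> units_out v \<Longrightarrow> incident E ends (fst u) v"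
  unfolding units_out_def flow_units_def utail_def incident_def by (auto split: if_splits)

text \<open>An open end has a single edge-end, so its edge is unique and not a loop.\<close>
lemma port_unique_edge:
  assumes "x \<in> S \<union> T"
  shows "\<exists>e0\<in>E. (fst (ends e0) = x \<or> snd (ends e0) = x) \<and>
           \<not> (fst (ends e0) = x \<and> snd (ends e0) = x) \<and>
           (\<forall>e\<in>E. e \<noteq> e0 \<longrightarrow> fst (ends e) \<noteq> x \<and> snd (ends e) \<noteq> x)"
proof -
  obtain p where p: "ends_at E ends x = {p}" using deg[OF assms] by (meson card_1_singletonE)
  obtain e0 b0 where p0: "p = (e0, b0)" by (cases p)
  have e0: "e0 \<in> E" "endpt ends e0 b0 = x" using p p0 unfolding ends_at_def by auto
  have mem: "(e, b) \<in> ends_at E ends x \<longleftrightarrow> e \<in> E \<and> endpt ends e b = x" for e b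
    unfolding ends_at_def by auto
  have fst_end: "fst (ends e) = x \<Longrightarrow> e \<in> E \<Longrightarrow> (e, False) = p" for e
    using mem[of e False] p unfolding endpt_def by auto
  have snd_end: "snd (ends e) = x \<Longrightarrow> e \<in> E \<Longrightarrow> (e, True) = p" for e
    using mem[of e True] p unfolding endpt_def by auto
  show ?thesis
  proof (intro bexI[of _ e0] conjI)
    show "fst (ends e0) = x \<or> snd (ends e0) = x"
      using e0 unfolding endpt_def by (auto split: if_splits)
    show "\<not> (fst (ends e0) = x \<and> snd (ends e0) = x)" using fst_end[of e0] snd_end[of e0] e0 by auto
    show "\<forall>e\<in>E. e \<noteq> e0 \<longrightarrow> fst (ends e) \<noteq> x \<and> snd (ends e) \<noteq> x"
      using fst_end snd_end p0 by blast
  qed (use e0 in auto)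
qed

definition port_edge :: "'v \<Rightarrow> 'e" where
  "port_edge x = (THE e. e \<in> E \<and> (fst (ends e) = x \<or> snd (ends e) = x))"

lemma port_edge:
  assumes "x \<in> S \<union> T"
  shows "port_edge x \<in> E" "fst (ends (port_edge x)) = x \<or> snd (ends (port_edge x)) = x"
    "\<not> (fst (ends (port_edge x)) = x \<and> snd (ends (port_edge x)) = x)"
    "\<And>e. e \<in> E \<Longrightarrow> fst (ends e) = x \<or> snd (ends e) = x \<Longrightarrow> e = port_edge x"
proof -
  obtain e0 where e0: "e0 \<in> E" "fst (ends e0) = x \<or> snd (ends e0) = x"
    "\<not> (fst (ends e0) = x \<and> snd (ends e0) = x)"
    "\<forall>e\<in>E. e \<noteq> e0 \<longrightarrow> fst (ends e) \<noteq> x \<and> snd (ends e) \<noteq> x"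
    using port_unique_edge[OF assms] by blast
  have "port_edge x = e0" unfolding port_edge_def
    by (rule the_equality) (use e0 in auto)
  then show "port_edge x \<in> E" "fst (ends (port_edge x)) = x \<or> snd (ends (port_edge x)) = x"
    "\<not> (fst (ends (port_edge x)) = x \<and> snd (ends (port_edge x)) = x)"
    "\<And>e. e \<in> E \<Longrightarrow> fst (ends e) = x \<or> snd (ends e) = x \<Longrightarrow> e = port_edge x"
    using e0 by auto
qed

lemma incident_port_edge_iff:
  assumes "x \<in> S \<union> T"
  shows "incident E ends e x \<longleftrightarrow> e = port_edge x"
proof
  assume "incident E ends e x"
  then show "e = port_edge x" using port_edge(4)[OF assms, of e] unfolding incident_def by blast
next
  assume "e = port_edge x"
  then show "incident E ends e x" using port_edge(1,2)[OF assms] unfolding incident_def by blast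
qed

lemma net_out_port:
  assumes x: "x \<in> S \<union> T"
  shows "net_out g x =
    (if fst (ends (port_edge x)) = x then g (port_edge x) else - g (port_edge x))"
    (is "_ = ?val")
proof -
  have "net_out g x = (\<Sum>e\<in>E. if e = port_edge x then ?val else 0)"
    unfolding net_out_def
  proof (rule sum.cong[OF refl])
    fix e assume e: "e \<in> E"
    show "(if fst (ends e) = x then g e else 0) - (if snd (ends e) = x then g e else 0) =
        (if e = port_edge x then ?val else 0)"
    proof (cases "e = port_edge x")
      case True
      then show ?thesis using port_edge(2,3)[OF x] by auto
    next
      case False
      then have "fst (ends e) \<noteq> x" "snd (ends e) \<noteq> x" using port_edge(4)[OF x e] by auto
      then show ?thesis using False by simp
    qed
  qed
  also have "\<dots> = ?val" using port_edge(1)[OF x] finE by simp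
  finally show ?thesis .
qed

lemma net_out_source: "x \<in> S \<Longrightarrow> net_out g x = int (nunits (port_edge x))"
  using net_out_port[of x] gfeas unfolding feasible_def nunits_def by (auto split: if_splits)

lemma uhead_not_source:
  assumes u: "u \<in> flow_units"
  shows "uhead (fst u) \<notin> S"
proof
  let ?e = "fst u" and ?x = "uhead (fst u)"
  assume x: "?x \<in> S"
  have "g ?e \<noteq> 0" using u unfolding flow_units_def nunits_def by auto
  have "fst (ends ?e) = ?x \<or> snd (ends ?e) = ?x" unfolding uhead_def by auto
  then have "?e = port_edge ?x" using port_edge(4)[of ?x ?e] x flow_unit_edge[OF u] by auto
  then have "net_out g ?x = (if fst (ends ?e) = ?x then g ?e else - g ?e)"
    and "\<not> (fst (ends ?e) = ?x \<and> snd (ends ?e) = ?x)"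
    using net_out_port[of ?x] port_edge(3)[of ?x] x by auto
  moreover have "net_out g ?x \<ge> 0" using x gfeas unfolding feasible_def by auto
  ultimately show False using \<open>g ?e \<noteq> 0\<close> unfolding uhead_def by (auto split: if_splits)
qed

lemma card_units_in_out:
  assumes v: "v \<in> V" shows "card (units_in v) = card (units_out v)"
proof -
  have ci: "card (units_in v) = (\<Sum>e\<in>{e\<in>E. uhead e = v}. nunits e)"
  proof -
    have "units_in v = Sigma {e\<in>E. uhead e = v} (\<lambda>e. {..<nunits e})"
      unfolding units_in_def flow_units_def by auto
    then show ?thesis using finE by simp
  qed
  have co: "card (units_out v) = (\<Sum>e\<in>{e\<in>E. utail e = v}. nunits e)"
  proof -
    have "units_out v = Sigma {e\<in>E. utail e = v} (\<lambda>e. {..<nunits e})"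
      unfolding units_out_def flow_units_def by auto
    then show ?thesis using finE by simp
  qed
  have o1: "int (card (units_out v)) = (\<Sum>e\<in>E. int (if utail e = v then nunits e else 0))"
    unfolding co using finE by (simp add: sum.inter_filter)
  have i1: "int (card (units_in v)) = (\<Sum>e\<in>E. int (if uhead e = v then nunits e else 0))"
    unfolding ci using finE by (simp add: sum.inter_filter)
  have "int (card (units_out v)) - int (card (units_in v)) =
      (\<Sum>e\<in>E. int (if utail e = v then nunits e else 0) - int (if uhead e = v then nunits e else 0))"
    unfolding o1 i1 by (simp only: sum_subtractf)
  also have "\<dots> = net_out g v"
    unfolding net_out_def
    by (rule sum.cong[OF refl]) (auto simp: utail_def uhead_def nunits_def)
  also have "\<dots> = 0" using gfeas v unfolding feasible_def by auto
  finally show ?thesis by simp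
qed

text \<open>By flow conservation an inner vertex has as many incoming as outgoing units; any bijection
  between them chains the units into paths.\<close>
definition route :: "'v \<Rightarrow> 'e \<times> nat \<Rightarrow> 'e \<times> nat" where
  "route v = (SOME h. bij_betw h (units_in v) (units_out v))"

lemma route_bij: "v \<in> V \<Longrightarrow> bij_betw (route v) (units_in v) (units_out v)"
proof -
  assume v: "v \<in> V"
  have "finite (units_in v)" "finite (units_out v)"
    using finite_flow_units unfolding units_in_def units_out_def by auto
  then have "\<exists>h. bij_betw h (units_in v) (units_out v)"
    using card_units_in_out[OF v] by (rule finite_same_card_bij)
  then show ?thesis unfolding route_def by (rule someI_ex)
qed

definition next_unit :: "'e \<times> nat \<Rightarrow> 'e \<times> nat" where
  "next_unit u = route (uhead (fst u)) u"

lemma next_unit: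
  assumes "u \<in> flow_units" "uhead (fst u) \<in> V"
  shows "next_unit u \<in> flow_units" "utail (fst (next_unit u)) = uhead (fst u)"
proof -
  have "u \<in> units_in (uhead (fst u))" using assms unfolding units_in_def by auto
  then have "next_unit u \<in> units_out (uhead (fst u))"
    using route_bij[OF assms(2)] unfolding next_unit_def bij_betw_def by auto
  then show "next_unit u \<in> flow_units" "utail (fst (next_unit u)) = uhead (fst u)"
    unfolding units_out_def by auto
qed

lemma next_unit_inj:
  assumes "u \<in> flow_units" "uhead (fst u) \<in> V" "u' \<in> flow_units" "uhead (fst u') \<in> V"
    and "next_unit u = next_unit u'"
  shows "u = u'"
proof -
  have hh: "uhead (fst u) = uhead (fst u')"
    using next_unit(2)[OF assms(1,2)] next_unit(2)[OF assms(3,4)] assms(5)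
    by simp
  have "u \<in> units_in (uhead (fst u))" "u' \<in> units_in (uhead (fst u))"
    using assms hh unfolding units_in_def by auto
  moreover have "inj_on (route (uhead (fst u))) (units_in (uhead (fst u)))"
    using route_bij[OF assms(2)] by (rule bij_betw_imp_inj_on)
  moreover have "route (uhead (fst u)) u = route (uhead (fst u)) u'"
    using assms(5) hh unfolding next_unit_def by simp
  ultimately show ?thesis by (meson inj_onD)
qed

definition trace :: "nat \<Rightarrow> 'e \<times> nat \<Rightarrow> 'e \<times> nat" where
  "trace n u = (next_unit ^^ n) u"

definition inner_steps :: "'e \<times> nat \<Rightarrow> nat \<Rightarrow> bool" where
  "inner_steps u0 n \<longleftrightarrow> (\<forall>k<n. uhead (fst (trace k u0)) \<in> V)"

definition source_unit :: "'e \<times> nat \<Rightarrow> bool" where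
  "source_unit u0 \<longleftrightarrow> u0 \<in> flow_units \<and> utail (fst u0) \<in> S"

lemma trace_0[simp]: "trace 0 u = u"
  and trace_Suc: "trace (Suc n) u = next_unit (trace n u)"
  unfolding trace_def by auto

lemma trace_in_units: "u0 \<in> flow_units \<Longrightarrow> inner_steps u0 n \<Longrightarrow> trace n u0 \<in> flow_units"
proof (induction n)
  case 0 then show ?case by simp
next
  case (Suc n)
  have "inner_steps u0 n" using Suc.prems unfolding inner_steps_def by auto
  then have "trace n u0 \<in> flow_units" using Suc by auto
  moreover have "uhead (fst (trace n u0)) \<in> V" using Suc.prems unfolding inner_steps_def by auto
  ultimately show ?case by (simp add: trace_Suc next_unit)
qed

lemma inner_steps_Suc:
  "inner_steps u0 (Suc n) \<longleftrightarrow> inner_steps u0 n \<and> uhead (fst (trace n u0)) \<in> V"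
  unfolding inner_steps_def using less_Suc_eq by auto

lemma utail_trace_Suc:
  assumes "u0 \<in> flow_units" "inner_steps u0 (Suc n)"
  shows "utail (fst (trace (Suc n) u0)) \<in> V"
proof -
  have "trace n u0 \<in> flow_units" "uhead (fst (trace n u0)) \<in> V"
    using trace_in_units assms inner_steps_Suc by auto
  then show ?thesis by (simp add: trace_Suc next_unit)
qed

lemma source_port_unit:
  assumes s: "s \<in> S" and i: "i < nunits (port_edge s)"
  shows "source_unit (port_edge s, i)" "utail (port_edge s) = s"
proof -
  have u: "(port_edge s, i) \<in> flow_units"
    using port_edge(1)[of s] s i unfolding flow_units_def by simp
  have "uhead (port_edge s) \<noteq> s" using uhead_not_source[OF u] s by auto
  then show "utail (port_edge s) = s"
    using port_edge(2)[of s] s unfolding utail_def uhead_def by (auto split: if_splits)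
  then show "source_unit (port_edge s, i)" using u s unfolding source_unit_def by simp
qed

lemma trace_unique:
  assumes u0: "source_unit u0" and u1: "source_unit u1"
    and "inner_steps u0 n" "inner_steps u1 n'" "trace n u0 = trace n' u1"
  shows "u0 = u1 \<and> n = n'"
  using assms(3-5)
proof (induction n arbitrary: n')
  case 0
  then show ?case
    using utail_trace_Suc[of u1] u0 u1 disjSV unfolding source_unit_def by (cases n') auto
next
  case (Suc n)
  show ?case
  proof (cases n')
    case 0
    then show ?thesis
      using utail_trace_Suc[of u0 n] Suc.prems u0 u1 disjSV unfolding source_unit_def by auto
  next
    case (Suc k)
    have "trace n u0 \<in> flow_units" "uhead (fst (trace n u0)) \<in> V" "inner_steps u0 n"
      using trace_in_units[of u0 n] \<open>inner_steps u0 (Suc n)\<close> u0 inner_steps_Suc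
      unfolding source_unit_def by auto
    moreover have "trace k u1 \<in> flow_units" "uhead (fst (trace k u1)) \<in> V" "inner_steps u1 k"
      using trace_in_units[of u1 k] \<open>inner_steps u1 n'\<close> Suc u1 inner_steps_Suc
      unfolding source_unit_def by auto
    ultimately have "trace n u0 = trace k u1" "inner_steps u0 n" "inner_steps u1 k"
      using next_unit_inj \<open>trace (Suc n) u0 = trace n' u1\<close> Suc by (auto simp: trace_Suc)
    then show ?thesis using Suc.IH Suc by auto
  qed
qed

lemma trace_leaves_inner:
  assumes u0: "source_unit u0"
  shows "\<exists>n. inner_steps u0 n \<and> uhead (fst (trace n u0)) \<notin> V"
proof (rule ccontr)
  assume "\<not> ?thesis"
  then have all: "inner_steps u0 n" for n
  proof (induction n)
    case 0 then show ?case by (simp add: inner_steps_def)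
  next
    case (Suc n) then show ?case by (simp add: inner_steps_Suc)
  qed
  have "inj (\<lambda>n. trace n u0)"
    by (rule injI) (use trace_unique[OF u0 u0 all all] in blast)
  moreover have "range (\<lambda>n. trace n u0) \<subseteq> flow_units"
    using trace_in_units[OF _ all] u0 unfolding source_unit_def by auto
  ultimately have "finite (UNIV :: nat set)"
    using finite_flow_units by (metis finite_imageD finite_subset)
  then show False by simp
qed

definition on_trace :: "'e \<times> nat \<Rightarrow> nat \<Rightarrow> 'e \<times> nat \<Rightarrow> bool" where
  "on_trace u0 n u \<longleftrightarrow> source_unit u0 \<and> inner_steps u0 n \<and> trace n u0 = u"

definition trace_origin :: "'e \<times> nat \<Rightarrow> 'e \<times> nat" where
  "trace_origin u = fst (SOME p. on_trace (fst p) (snd p) u)"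

lemma trace_origin_eq:
  assumes "on_trace u0 n u"
  shows "trace_origin u = u0"
proof -
  have "\<exists>p. on_trace (fst p) (snd p) u" using assms by (intro exI[of _ "(u0, n)"]) simp
  then have "on_trace (fst (SOME p. on_trace (fst p) (snd p) u))
      (snd (SOME p. on_trace (fst p) (snd p) u)) u"
    by (rule someI_ex)
  then show ?thesis using assms trace_unique unfolding trace_origin_def on_trace_def by blast
qed

lemma on_trace_next_unit:
  "on_trace u0 n u \<Longrightarrow> uhead (fst u) \<in> V \<Longrightarrow> on_trace u0 (Suc n) (next_unit u)"
  unfolding on_trace_def by (simp add: inner_steps_Suc trace_Suc)

lemma on_trace_next_unitD:
  assumes u: "u \<in> flow_units" "uhead (fst u) \<in> V" and p: "on_trace u0 n (next_unit u)"
  shows "\<exists>k. on_trace u0 k u"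
proof (cases n)
  case 0
  then have "utail (fst u0) \<in> V" using p next_unit(2)[OF u] u(2) unfolding on_trace_def by auto
  then show ?thesis using p disjSV unfolding on_trace_def source_unit_def by auto
next
  case (Suc k)
  have k: "trace k u0 \<in> flow_units" "uhead (fst (trace k u0)) \<in> V" "inner_steps u0 k"
    using trace_in_units[of u0 k] p Suc inner_steps_Suc
    unfolding on_trace_def source_unit_def by auto
  then have "trace k u0 = u"
    using next_unit_inj[OF k(1,2) u] p Suc unfolding on_trace_def by (simp add: trace_Suc)
  then show ?thesis using p k unfolding on_trace_def by blast
qed

lemma trace_reaches_output:
  assumes u0: "source_unit u0"
  obtains n t where "inner_steps u0 n" "t \<in> T" "fst (trace n u0) = port_edge t"
proof -
  obtain n where n: "inner_steps u0 n" "uhead (fst (trace n u0)) \<notin> V"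
    using trace_leaves_inner[OF u0] by blast
  define t where "t = uhead (fst (trace n u0))"
  have u: "trace n u0 \<in> flow_units" using trace_in_units u0 n(1) unfolding source_unit_def by auto
  have e: "fst (trace n u0) \<in> E" using flow_unit_edge[OF u] by simp
  have "t \<in> S \<union> T \<union> V" using endsN[OF e] unfolding t_def uhead_def by auto
  then have t: "t \<in> T" using uhead_not_source[OF u] n(2) unfolding t_def by auto
  have "fst (trace n u0) = port_edge t"
    using t e by (intro port_edge(4)) (auto simp: t_def uhead_def)
  then show ?thesis using that n(1) t by blast
qed

end

section \<open>Base-d digits\<close>

definition digit :: "nat \<Rightarrow> nat \<Rightarrow> nat \<Rightarrow> nat" where
  "digit d n i = n div d ^ i mod d"
definition from_digits :: "nat \<Rightarrow> nat \<Rightarrow> (nat \<Rightarrow> nat) \<Rightarrow> nat" where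
  "from_digits d k x = (\<Sum>i<k. x i * d ^ i)"

lemma from_digits_digit_mod: "from_digits d k (digit d n) = n mod d ^ k"
proof (induction k)
  case 0 then show ?case by (simp add: from_digits_def)
next
  case (Suc k)
  have "from_digits d (Suc k) (digit d n) = n mod d ^ k + (n div d ^ k mod d) * d ^ k"
    using Suc by (simp add: from_digits_def digit_def)
  also have "\<dots> = n mod (d ^ k * d)" by (simp add: mod_mult2_eq)
  finally show ?case by (simp add: mult.commute)
qed

lemma from_digits_digit: "n < d ^ k \<Longrightarrow> from_digits d k (digit d n) = n"
  by (simp add: from_digits_digit_mod)

lemma from_digits_less: "(\<And>i. i < k \<Longrightarrow> x i < d) \<Longrightarrow> from_digits d k x < d ^ k"
proof (induction k)
  case 0 then show ?case by (simp add: from_digits_def)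
next
  case (Suc k)
  have ih: "from_digits d k x < d ^ k" using Suc by auto
  have xk: "x k + 1 \<le> d" using Suc.prems[of k] by simp
  have "from_digits d (Suc k) x = from_digits d k x + x k * d ^ k" by (simp add: from_digits_def)
  also have "\<dots> < d ^ k + x k * d ^ k" using ih by simp
  also have "\<dots> = (x k + 1) * d ^ k" by simp
  also have "\<dots> \<le> d * d ^ k" using xk by (rule mult_right_mono) simp
  finally show ?case by simp
qed

lemma from_digits_cong: "(\<And>i. i < k \<Longrightarrow> x i = y i) \<Longrightarrow> from_digits d k x = from_digits d k y"
  unfolding from_digits_def by (rule sum.cong) auto

lemma digit_from_digits:
  assumes "d > 0" "\<And>i. i < k \<Longrightarrow> x i < d" "j < k"
  shows "digit d (from_digits d k x) j = x j"
  using assms(2,3)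
proof (induction k)
  case 0 then show ?case by simp
next
  case (Suc k)
  define A where "A = from_digits d k x"
  have A: "A < d ^ k" unfolding A_def using Suc.prems by (intro from_digits_less) auto
  have eq: "from_digits d (Suc k) x = A + x k * d ^ k" by (simp add: from_digits_def A_def)
  show ?case
  proof (cases "j = k")
    case True
    have "(A + x k * d ^ k) div d ^ k = x k" using A assms(1) by simp
    then show ?thesis using True eq Suc.prems(1)[of k] unfolding digit_def by simp
  next
    case False
    then have jk: "j < k" using Suc.prems by simp
    have pw: "d ^ k = d ^ j * (d * d ^ (k - j - 1))"
      using jk by (simp flip: power_add power_Suc)
    have e2: "x k * d ^ k = (d * (x k * d ^ (k - j - 1))) * d ^ j"
      unfolding pw by (simp add: ac_simps)
    have "(A + x k * d ^ k) div d ^ j = d * (x k * d ^ (k - j - 1)) + A div d ^ j"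
      unfolding e2 by (rule div_mult_self1) (use assms(1) in simp)
    then have "digit d (A + x k * d ^ k) j = digit d A j"
      unfolding digit_def by (simp add: add.commute[of "d * _"])
    moreover have "digit d A j = x j" unfolding A_def using Suc.IH Suc.prems jk by auto
    ultimately show ?thesis using eq by simp
  qed
qed

lemma digit_less: "d > 0 \<Longrightarrow> digit d n i < d"
  unfolding digit_def by simp

section \<open>Routing digits along the unit paths\<close>

locale flow_routing = unit_flow S T V E ends m g
  for S T V :: "'v set" and E :: "'e set" and ends :: "'e \<Rightarrow> 'v \<times> 'v" and m :: "'e \<Rightarrow> nat"
    and g :: "'e \<Rightarrow> int" +
  fixes c :: "'e \<Rightarrow> nat" and d :: nat
  assumes dpos: "d > 0" and cpow: "\<And>e. e \<in> E \<Longrightarrow> c e = d ^ m e"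
begin

text \<open>The index W e < d ^ nunits e of an edge is read as the list of base-d digits carried by the
  flow units (e, 0), ..., (e, nunits e - 1).\<close>
definition unit_digit :: "('e \<Rightarrow> nat) \<Rightarrow> 'e \<times> nat \<Rightarrow> nat" where
  "unit_digit W u = digit d (W (fst u)) (snd u)"

definition routes_digits :: "'v \<Rightarrow> ('e \<Rightarrow> nat) \<Rightarrow> bool" where
  "routes_digits v W \<longleftrightarrow> (\<forall>e. incident E ends e v \<longrightarrow> W e < d ^ nunits e) \<and>
     (\<forall>u\<in>units_in v. unit_digit W u = unit_digit W (route v u))"

text \<open>The edge-end (e, snd (ends e) = v) lies at v whenever e is incident to v.\<close>
definition routing_tensor :: "'v \<Rightarrow> ('e \<times> bool \<Rightarrow> nat) \<Rightarrow> complex" where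
  "routing_tensor v w = (if routes_digits v (\<lambda>e. w (e, snd (ends e) = v)) then 1 else 0)"

abbreviation routing_matrix :: "('v \<Rightarrow> nat) \<Rightarrow> ('v \<Rightarrow> nat) \<Rightarrow> complex" where
  "routing_matrix \<equiv> contract S T V E ends c routing_tensor"

lemma routes_digits_cong:
  assumes v: "v \<in> V" and eq: "\<And>e. incident E ends e v \<Longrightarrow> W e = W' e"
  shows "routes_digits v W = routes_digits v W'"
proof -
  have "unit_digit W u = unit_digit W' u" "unit_digit W (route v u) = unit_digit W' (route v u)"
    if u: "u \<in> units_in v" for u
  proof -
    have "route v u \<in> units_out v" using route_bij[OF v] u unfolding bij_betw_def by auto
    then show "unit_digit W u = unit_digit W' u"
      and "unit_digit W (route v u) = unit_digit W' (route v u)"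
      using eq units_in_incident[OF u] units_out_incident unfolding unit_digit_def by auto
  qed
  then show ?thesis unfolding routes_digits_def using eq by auto
qed

lemma routing_tensor_eval:
  assumes "v \<in> V"
  shows "routing_tensor v (\<lambda>(e, b). if (e, b) \<in> ends_at E ends v then W e else 0) =
    (if routes_digits v W then 1 else 0)"
proof -
  let ?w = "\<lambda>(e, b). if (e, b) \<in> ends_at E ends v then W e else 0"
  have "?w (e, snd (ends e) = v) = W e" if "incident E ends e v" for e
    using that unfolding incident_def ends_at_def endpt_def by auto
  then have "routes_digits v (\<lambda>e. ?w (e, snd (ends e) = v)) = routes_digits v W"
    by (rule routes_digits_cong[OF assms])
  then show ?thesis unfolding routing_tensor_def by simp
qed

definition compatible_assignments :: "('v \<Rightarrow> nat) \<Rightarrow> ('v \<Rightarrow> nat) \<Rightarrow> ('e \<Rightarrow> nat) set" where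
  "compatible_assignments IT IS = {W \<in> edge_assignments E c.
     (\<forall>u\<in>S. \<forall>e. incident E ends e u \<longrightarrow> W e = IS u) \<and>
     (\<forall>u\<in>T. \<forall>e. incident E ends e u \<longrightarrow> W e = IT u)}"

lemma routing_matrix_eq_card:
  "routing_matrix IT IS = of_nat (card {W \<in> compatible_assignments IT IS. \<forall>v\<in>V. routes_digits v W})"
proof -
  have fin: "finite (compatible_assignments IT IS)"
    unfolding compatible_assignments_def using finite_edge_assignments[OF finE] by auto
  have "(\<Prod>v\<in>V. routing_tensor v (\<lambda>(e, b). if (e, b) \<in> ends_at E ends v then W e else 0)) =
      (if \<forall>v\<in>V. routes_digits v W then 1 else 0)" for W
  proof -
    have "(\<Prod>v\<in>V. routing_tensor v (\<lambda>(e, b). if (e, b) \<in> ends_at E ends v then W e else 0)) =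
        (\<Prod>v\<in>V. if routes_digits v W then 1 else 0)"
      by (rule prod.cong[OF refl]) (simp add: routing_tensor_eval)
    also have "\<dots> = (if \<forall>v\<in>V. routes_digits v W then 1 else 0)"
      using finV by auto
    finally show ?thesis .
  qed
  then have "routing_matrix IT IS =
      (\<Sum>W\<in>compatible_assignments IT IS. if \<forall>v\<in>V. routes_digits v W then 1 else 0)"
    unfolding contract_def compatible_assignments_def by simp
  also have "\<dots> = of_nat (card {W \<in> compatible_assignments IT IS. \<forall>v\<in>V. routes_digits v W})"
    by (simp add: sum.inter_filter[OF fin, symmetric])
  finally show ?thesis .
qed

lemma routing_matrix_nonzero_iff:
  "routing_matrix IT IS \<noteq> 0 \<longleftrightarrow> (\<exists>W\<in>compatible_assignments IT IS. \<forall>v\<in>V. routes_digits v W)"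
proof -
  have "finite (compatible_assignments IT IS)"
    unfolding compatible_assignments_def using finite_edge_assignments[OF finE] by auto
  then show ?thesis unfolding routing_matrix_eq_card by auto
qed

text \<open>Units on flow cycles lie on no path from an input and carry the digit 0.\<close>
definition carried_digit :: "('v \<Rightarrow> nat) \<Rightarrow> 'e \<times> nat \<Rightarrow> nat" where
  "carried_digit IS u =
     (if \<exists>u0 n. on_trace u0 n u
      then digit d (IS (utail (fst (trace_origin u)))) (snd (trace_origin u)) else 0)"

definition routed_assignment :: "('v \<Rightarrow> nat) \<Rightarrow> 'e \<Rightarrow> nat" where
  "routed_assignment IS e =
     (if e \<in> E then from_digits d (nunits e) (\<lambda>i. carried_digit IS (e, i)) else 0)"

definition flow_inputs :: "('v \<Rightarrow> nat) set" where
  "flow_inputs = edge_assignments S (\<lambda>s. d ^ nunits (port_edge s))"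

definition routed_output :: "('v \<Rightarrow> nat) \<Rightarrow> 'v \<Rightarrow> nat" where
  "routed_output IS = (\<lambda>t. if t \<in> T then routed_assignment IS (port_edge t) else 0)"

lemma carried_digit_less: "carried_digit IS u < d"
  unfolding carried_digit_def using dpos digit_less by auto

lemma carried_digit_on_trace:
  assumes "on_trace u0 n u"
  shows "carried_digit IS u = digit d (IS (utail (fst u0))) (snd u0)"
proof -
  have "\<exists>u0 n. on_trace u0 n u" using assms by blast
  then show ?thesis unfolding carried_digit_def using trace_origin_eq[OF assms] by simp
qed

lemma carried_digit_next_unit:
  assumes u: "u \<in> flow_units" "uhead (fst u) \<in> V"
  shows "carried_digit IS (next_unit u) = carried_digit IS u"
proof (cases "\<exists>u0 n. on_trace u0 n u")
  case True
  then obtain u0 n where "on_trace u0 n u" by auto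
  then show ?thesis using on_trace_next_unit u(2) carried_digit_on_trace by metis
next
  case False
  then have "\<not> (\<exists>u0 n. on_trace u0 n (next_unit u))" using on_trace_next_unitD[OF u] by blast
  then show ?thesis using False unfolding carried_digit_def by simp
qed

lemma routed_assignment_port:
  assumes IS: "IS \<in> flow_inputs" and s: "s \<in> S"
  shows "routed_assignment IS (port_edge s) = IS s"
proof -
  let ?e = "port_edge s"
  have "from_digits d (nunits ?e) (\<lambda>i. carried_digit IS (?e, i)) =
      from_digits d (nunits ?e) (digit d (IS s))"
  proof (rule from_digits_cong)
    fix i assume i: "i < nunits ?e"
    have "on_trace (?e, i) 0 (?e, i)"
      using source_port_unit(1)[OF s i] unfolding on_trace_def inner_steps_def by simp
    then show "carried_digit IS (?e, i) = digit d (IS s) i"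
      using carried_digit_on_trace source_port_unit(2)[OF s i] by simp
  qed
  also have "\<dots> = IS s"
    using IS s unfolding flow_inputs_def edge_assignments_def by (intro from_digits_digit) auto
  finally show ?thesis using port_edge(1)[of s] s unfolding routed_assignment_def by simp
qed

lemma routed_assignment_less: "e \<in> E \<Longrightarrow> routed_assignment IS e < d ^ nunits e"
  unfolding routed_assignment_def using carried_digit_less by (auto intro: from_digits_less)

lemma pow_nunits_le_c: "e \<in> E \<Longrightarrow> d ^ nunits e \<le> c e"
  using cpow nunits_le_m dpos by (simp add: power_increasing)

lemma unit_digit_routed_assignment:
  assumes "u \<in> flow_units"
  shows "unit_digit (routed_assignment IS) u = carried_digit IS u"
proof -
  obtain e i where u: "u = (e, i)" and e: "e \<in> E" "i < nunits e"
    using flow_unit_edge[OF assms] by (cases u) auto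
  show ?thesis unfolding unit_digit_def routed_assignment_def u
    using digit_from_digits[OF dpos, of "nunits e" "\<lambda>i. carried_digit IS (e, i)" i]
      carried_digit_less e by simp
qed

lemma routes_digits_routed_assignment:
  assumes v: "v \<in> V"
  shows "routes_digits v (routed_assignment IS)"
  unfolding routes_digits_def
proof (intro conjI allI ballI impI)
  fix e assume "incident E ends e v"
  then show "routed_assignment IS e < d ^ nunits e"
    by (intro routed_assignment_less) (simp add: incident_def)
next
  fix u assume u: "u \<in> units_in v"
  then have "u \<in> flow_units" "uhead (fst u) = v" unfolding units_in_def by auto
  then show "unit_digit (routed_assignment IS) u = unit_digit (routed_assignment IS) (route v u)"
    using next_unit(1) unit_digit_routed_assignment carried_digit_next_unit v
    unfolding next_unit_def by metis
qed

lemma routed_assignment_compatible: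
  assumes "IS \<in> flow_inputs"
  shows "routed_assignment IS \<in> compatible_assignments (routed_output IS) IS"
  unfolding compatible_assignments_def
proof (intro CollectI conjI ballI allI impI)
  show "routed_assignment IS \<in> edge_assignments E c"
    unfolding edge_assignments_def using routed_assignment_less pow_nunits_le_c
    by (auto intro: less_le_trans simp: routed_assignment_def)
next
  fix u e assume "u \<in> S" "incident E ends e u"
  then show "routed_assignment IS e = IS u"
    using incident_port_edge_iff[of u e] routed_assignment_port[OF assms] by auto
next
  fix u e assume "u \<in> T" "incident E ends e u"
  then show "routed_assignment IS e = routed_output IS u"
    using incident_port_edge_iff[of u e] unfolding routed_output_def by auto
qed

lemma routing_matrix_diag_nonzero: "IS \<in> flow_inputs \<Longrightarrow> routing_matrix (routed_output IS) IS \<noteq> 0"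
  using routing_matrix_nonzero_iff routed_assignment_compatible routes_digits_routed_assignment
  by blast

lemma unit_digit_trace:
  assumes W: "\<forall>v\<in>V. routes_digits v W" and u0: "source_unit u0"
  shows "inner_steps u0 n \<Longrightarrow> unit_digit W (trace n u0) = unit_digit W u0"
proof (induction n)
  case 0 then show ?case by simp
next
  case (Suc n)
  then have u: "trace n u0 \<in> flow_units" "uhead (fst (trace n u0)) \<in> V" "inner_steps u0 n"
    using trace_in_units[of u0 n] u0 inner_steps_Suc unfolding source_unit_def by auto
  then have "trace n u0 \<in> units_in (uhead (fst (trace n u0)))" unfolding units_in_def by auto
  then have "unit_digit W (next_unit (trace n u0)) = unit_digit W (trace n u0)"
    using W u(2) unfolding routes_digits_def next_unit_def by auto
  then show ?case using Suc.IH u(3) by (simp add: trace_Suc)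
qed

text \<open>A compatible assignment of nonzero weight transports every input digit of IS' unchanged
  along its unit path to an output, where the row routed_output IS prescribes the digit of IS.\<close>
lemma routing_matrix_nonzero_imp_eq:
  assumes IS: "IS \<in> flow_inputs" and IS': "IS' \<in> flow_inputs"
    and nz: "routing_matrix (routed_output IS) IS' \<noteq> 0"
  shows "IS' = IS"
proof -
  obtain W where W: "W \<in> compatible_assignments (routed_output IS) IS'" "\<forall>v\<in>V. routes_digits v W"
    using nz routing_matrix_nonzero_iff by blast
  have digit_eq: "digit d (IS' s) i = digit d (IS s) i"
    if s: "s \<in> S" and i: "i < nunits (port_edge s)" for s i
  proof -
    let ?u0 = "(port_edge s, i)"
    have u0: "source_unit ?u0" and tail: "utail (port_edge s) = s"
      using source_port_unit[OF s i] by auto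
    obtain n t where n: "inner_steps ?u0 n" and t: "t \<in> T" "fst (trace n ?u0) = port_edge t"
      using trace_reaches_output[OF u0] by blast
    have out: "W (port_edge t) = routed_assignment IS (port_edge t)"
      using W(1) t(1) port_edge(1,2)[of t]
      unfolding compatible_assignments_def routed_output_def incident_def by auto
    have "digit d (IS' s) i = unit_digit W ?u0"
      using W(1) s port_edge(1,2)[of s]
      unfolding compatible_assignments_def incident_def unit_digit_def by auto
    also have "\<dots> = unit_digit W (trace n ?u0)" using unit_digit_trace[OF W(2) u0 n] ..
    also have "\<dots> = unit_digit (routed_assignment IS) (trace n ?u0)"
      unfolding unit_digit_def t(2) out ..
    also have "\<dots> = digit d (IS s) i"
      using unit_digit_routed_assignment carried_digit_on_trace[of ?u0 n] trace_in_units u0 n tail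
      unfolding on_trace_def source_unit_def by simp
    finally show ?thesis .
  qed
  have "IS' s = IS s" if s: "s \<in> S" for s
  proof -
    have "IS' s = from_digits d (nunits (port_edge s)) (digit d (IS' s))"
      using IS' s unfolding flow_inputs_def edge_assignments_def by (simp add: from_digits_digit)
    also have "\<dots> = from_digits d (nunits (port_edge s)) (digit d (IS s))"
      using digit_eq[OF s] by (rule from_digits_cong)
    also have "\<dots> = IS s"
      using IS s unfolding flow_inputs_def edge_assignments_def by (simp add: from_digits_digit)
    finally show ?thesis .
  qed
  then show ?thesis using IS IS' unfolding flow_inputs_def edge_assignments_def by fastforce
qed

lemma card_flow_inputs: "card flow_inputs = d ^ nat (flow_value g)"
proof -
  have "flow_value g = (\<Sum>s\<in>S. int (nunits (port_edge s)))"
    unfolding flow_value_def by (rule sum.cong) (auto simp: net_out_source)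
  then have "(\<Sum>s\<in>S. nunits (port_edge s)) = nat (flow_value g)"
    by (simp flip: of_nat_sum)
  then show ?thesis
    unfolding flow_inputs_def card_edge_assignments[OF finS] power_sum[symmetric] by simp
qed

lemma port_value_less_c:
  assumes "u \<in> S \<union> T" "incident E ends e u" "x < d ^ nunits (port_edge u)"
  shows "x < c e"
  using assms incident_port_edge_iff[of u e] port_edge(1)[of u] pow_nunits_le_c
  by (auto intro: less_le_trans)

lemma flow_inputs_port_assignments: "flow_inputs \<subseteq> port_assignments E ends c S"
proof
  fix IS assume IS: "IS \<in> flow_inputs"
  have "IS u < c e" if "u \<in> S" "incident E ends e u" for u e
    using IS that port_value_less_c[of u e "IS u"]
    unfolding flow_inputs_def edge_assignments_def by auto
  then show "IS \<in> port_assignments E ends c S"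
    using IS unfolding flow_inputs_def edge_assignments_def port_assignments_def by auto
qed

lemma routed_output_port_assignments: "routed_output IS \<in> port_assignments E ends c T"
proof -
  have "routed_output IS u < c e" if "u \<in> T" "incident E ends e u" for u e
    using that port_value_less_c[of u e] routed_assignment_less[OF port_edge(1)[of u]]
    unfolding routed_output_def by auto
  then show ?thesis unfolding port_assignments_def routed_output_def by auto
qed

lemma pow_flow_value_le_mat_rank:
  assumes "finite (port_assignments E ends c S)"
  shows "d ^ nat (flow_value g) \<le>
    mat_rank (port_assignments E ends c T) (port_assignments E ends c S) routing_matrix"
proof -
  have "lin_indep_cols (port_assignments E ends c T) routing_matrix flow_inputs"
    using routing_matrix_diag_nonzero routing_matrix_nonzero_imp_eq
      routed_output_port_assignments finite_edge_assignments[OF finS]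
    unfolding flow_inputs_def
    by (intro lin_indep_cols_by_pivot_rows[where \<rho> = routed_output]) auto
  then show ?thesis
    using card_le_mat_rank[OF assms flow_inputs_port_assignments] card_flow_inputs by simp
qed

end

lemma tn_template_flow_network:
  "tn_template S T V E ends c \<Longrightarrow> flow_network S T V E ends"
  unfolding tn_template_def by unfold_locales auto

lemma exists_edge_cut:
  assumes "tn_template S T V E ends c"
  shows "\<exists>C. is_edge_cut S T V E ends C"
  using assms unfolding is_edge_cut_def tn_template_def
  by (intro exI[of _ "{e\<in>E. (fst (ends e) \<in> S \<union> V \<and> snd (ends e) \<in> T) \<or>
                         (fst (ends e) \<in> T \<and> snd (ends e) \<in> S \<union> V)}"]
            exI[of _ "S \<union> V"] exI[of _ T]) auto

lemma finite_cut_capacities: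
  assumes "tn_template S T V E ends c"
  shows "finite {\<Prod>e\<in>C. c e | C. is_edge_cut S T V E ends C}"
proof -
  have "finite ((\<lambda>C. \<Prod>e\<in>C. c e) ` Pow E)" using assms unfolding tn_template_def by auto
  moreover have "{\<Prod>e\<in>C. c e | C. is_edge_cut S T V E ends C} \<subseteq> (\<lambda>C. \<Prod>e\<in>C. c e) ` Pow E"
    unfolding is_edge_cut_def by auto
  ultimately show ?thesis by (rule finite_subset[rotated])
qed

lemma QMC_attained:
  assumes "tn_template S T V E ends c"
  shows "\<exists>C. is_edge_cut S T V E ends C \<and> QMC S T V E ends c = (\<Prod>e\<in>C. c e)"
proof -
  have "{\<Prod>e\<in>C. c e | C. is_edge_cut S T V E ends C} \<noteq> {}" using exists_edge_cut[OF assms] by auto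
  then show ?thesis using Min_in[OF finite_cut_capacities[OF assms]] unfolding QMC_def by auto
qed

lemma QMC_le_cut_capacity:
  "tn_template S T V E ends c \<Longrightarrow> is_edge_cut S T V E ends C \<Longrightarrow>
    QMC S T V E ends c \<le> (\<Prod>e\<in>C. c e)"
  unfolding QMC_def by (intro Min_le finite_cut_capacities) auto

lemma finite_ranks:
  assumes "tn_template S T V E ends c"
  shows "finite {mat_rank (port_assignments E ends c T) (port_assignments E ends c S)
                   (contract S T V E ends c Tn) | Tn. True}"
proof -
  have "finite (port_assignments E ends c S)" by (rule finite_port_assignments[OF assms]) auto
  then have "{mat_rank (port_assignments E ends c T) (port_assignments E ends c S)
                (contract S T V E ends c Tn) | Tn. True} \<subseteq> {..card (port_assignments E ends c S)}"
    using mat_rank_le_card by auto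
  then show ?thesis by (rule finite_subset) simp
qed

lemma QMF_attained:
  assumes "tn_template S T V E ends c"
  shows "\<exists>Tn. QMF S T V E ends c = mat_rank (port_assignments E ends c T)
            (port_assignments E ends c S) (contract S T V E ends c Tn)"
  using Max_in[OF finite_ranks[OF assms]] unfolding QMF_def by auto

lemma mat_rank_le_QMF:
  "tn_template S T V E ends c \<Longrightarrow>
    mat_rank (port_assignments E ends c T) (port_assignments E ends c S)
      (contract S T V E ends c Tn) \<le> QMF S T V E ends c"
  unfolding QMF_def by (intro Max_ge finite_ranks) auto

lemma QMF_le_QMC:
  assumes "tn_template S T V E ends c"
  shows "QMF S T V E ends c \<le> QMC S T V E ends c"
  using QMF_attained[OF assms] QMC_attained[OF assms] mat_rank_contract_le_cut[OF assms]
  by metis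

lemma cut_capacity_le_mat_rank:
  assumes tmpl: "tn_template S T V E ends c" and "d > 0" and pow: "\<forall>e\<in>E. \<exists>k. c e = d ^ k"
  shows "\<exists>C Tn. is_edge_cut S T V E ends C \<and>
    (\<Prod>e\<in>C. c e) \<le> mat_rank (port_assignments E ends c T) (port_assignments E ends c S)
                        (contract S T V E ends c Tn)"
proof -
  define m where "m = (\<lambda>e. SOME k. c e = d ^ k)"
  have c_pow: "c e = d ^ m e" if "e \<in> E" for e
    unfolding m_def using pow that by (metis (mono_tags) someI_ex)
  interpret N: flow_network S T V E ends m
    using tn_template_flow_network[OF tmpl] .
  obtain g Sb Tb where g: "N.feasible g" "Sb \<inter> Tb = {}" "Sb \<union> Tb = S \<union> T \<union> V" "S \<subseteq> Sb" "T \<subseteq> Tb"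
    and flow_val: "N.flow_value g = (\<Sum>e\<in>N.cut_edges Sb Tb. int (m e))"
    using N.max_flow_min_cut by blast
  interpret L: flow_routing S T V E ends m g c d
    using tmpl assms(2) c_pow g(1) by unfold_locales (auto simp: tn_template_def)
  have cut: "is_edge_cut S T V E ends (N.cut_edges Sb Tb)"
    unfolding is_edge_cut_def N.cut_edges_def using g(2-5) by blast
  have "(\<Prod>e\<in>N.cut_edges Sb Tb. c e) = (\<Prod>e\<in>N.cut_edges Sb Tb. d ^ m e)"
    using c_pow unfolding N.cut_edges_def by (intro prod.cong) auto
  also have "\<dots> = d ^ nat (N.flow_value g)"
    unfolding flow_val by (simp add: power_sum flip: of_nat_sum)
  also have "\<dots> \<le> mat_rank (port_assignments E ends c T) (port_assignments E ends c S)
                     L.routing_matrix"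
    by (rule L.pow_flow_value_le_mat_rank[OF finite_port_assignments[OF tmpl]]) auto
  finally show ?thesis using cut by blast
qed

theorem theorem3p8:
  fixes S T V :: "'v set" and E :: "'e set" and ends :: "'e \<Rightarrow> 'v \<times> 'v"
    and c :: "'e \<Rightarrow> nat" and d :: nat
  assumes "tn_template S T V E ends c"
    and "d > 0"
    and "\<forall>e\<in>E. \<exists>m::nat. c e = d ^ m"
  shows "QMF S T V E ends c = QMC S T V E ends c"
proof (rule antisym)
  show "QMF S T V E ends c \<le> QMC S T V E ends c" by (rule QMF_le_QMC[OF assms(1)])
  obtain C Tn where "is_edge_cut S T V E ends C"
    and "(\<Prod>e\<in>C. c e) \<le> mat_rank (port_assignments E ends c T) (port_assignments E ends c S)
                           (contract S T V E ends c Tn)"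
    using cut_capacity_le_mat_rank[OF assms] by blast
  then show "QMC S T V E ends c \<le> QMF S T V E ends c"
    using QMC_le_cut_capacity[OF assms(1)] mat_rank_le_QMF[OF assms(1)] by (meson order_trans)
qed

end
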